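(* Let $G$ be a finite group and let $g\mapsto U_g$ be a unitary representation of $G$ on a finite-dimensional Hilbert space $\mathcal{H}$. Let $\mathcal{R}$ be a finite-dimensional reference Hilbert space, and suppose that, with $\hat{G}$ the set of inequivalent irreducible representations of $G$, there is a unitary identification $$\mathcal{H}\otimes\mathcal{R}\cong\bigoplus_{\mu\in\hat G}\mathcal{H}_\mu\otimes\mathbb{C}^{d_\mu},$$ under which $U_g\otimes I_{\mathcal{R}}$ acts as $\bigoplus_{\mu\in\hat G}U^\mu_g\otimes I_{\mathbb{C}^{d_\mu}}$, where $U^\mu$ is the irreducible representation $\mu$ on $\mathcal{H}_\mu$ and $d_\mu=\dim\mathcal{H}_\mu$. For each $\mu$ fix orthonormal bases $\{|\psi^\mu_j\rangle\}_{j=1}^{d_\mu}$ of $\mathcal{H}_\mu$ and $\{|\phi^\mu_j\rangle\}_{j=1}^{d_\mu}$ of $\mathbb{C}^{d_\mu}$, and let $|V_\mu\rangle\!\rangle:=\sum_{j=1}^{d_\mu}|\psi^\mu_j\rangle|\phi^\mu_j\rangle\in\mathcal{H}_\mu\otimes\mathbb{C}^{d_\mu}$. Let $$|\psi\rangle=\bigoplus_{\mu\in\hat G}\frac{a_\mu}{\sqrt{d_\mu}}|V_\mu\rangle\!\rangle\in\mathcal{H}\otimes\mathcal{R},\qquad a_\mu\in\mathbb{C},\ \sum_{\mu}|a_\mu|^2=1,$$ and let $\mu_0\in\hat G$ be such that $d_{\mu_0}|a_{\mu_0}|\ge d_\mu|a_\mu|$ for all $\mu\in\hat G$. For $g\in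 G$ set $|u_g\rangle:=(U_g\otimes I_{\mathcal{R}})|\psi\rangle$. If $$d_{\mu_0}|a_{\mu_0}|\le\sum_{\mu\in\hat G,\ \mu\neq\mu_0}d_\mu|a_\mu|,$$ then conclusive single-state exclusion of the set $\{|u_g\rangle: g\in G\}$ can be done, i.e., there exists a POVM $\{M_g\}_{g\in G}$ on $\mathcal{H}\otimes\mathcal{R}$ (so $M_g\ge 0$ and $\sum_{g\in G}M_g=I$) such that $\langle u_g|M_g|u_g\rangle=0$ for every $g\in G$.
   Context: Conclusive single-state exclusion of a finite set of pure states $\{|u_g\rangle\}_{g\in G}$ means the existence of a POVM $\{M_g\}_{g\in G}$ (positive semidefinite operators summing to the identity) with $\operatorname{tr}[M_g|u_g\rangle\langle u_g|]=0$ for all $g$; equivalently, the minimum of $\sum_g\operatorname{tr}[M_g|u_g\rangle\langle u_g|]$ over all POVMs is $0$. The vector $|V_\mu\rangle\!\rangle$ is an (unnormalized) maximally entangled vector between the irreducible space $\mathcal{H}_\mu$ and the multiplicity space $\mathbb{C}^{d_\mu}$. *)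

theory Defs
  imports "HOL-Algebra.Group" "Jordan_Normal_Form.Matrix"
begin

text \<open>Hilbert spaces of dimension n are modelled as C^n (complex vec of length n),
  operators as complex matrices.\<close>

definition adj :: "complex mat \<Rightarrow> complex mat" where
  "adj A = mat (dim_col A) (dim_row A) (\<lambda>(i,j). cnj (A $$ (j,i)))"

definition unitary_mat :: "nat \<Rightarrow> complex mat \<Rightarrow> bool" where
  "unitary_mat n A \<longleftrightarrow> A \<in> carrier_mat n n \<and> adj A * A = 1\<^sub>m n \<and> A * adj A = 1\<^sub>m n"

text \<open>Inner product, antilinear in the first argument: inner v w = <v|w>.\<close>
definition inner :: "complex vec \<Rightarrow> complex vec \<Rightarrow> complex" where
  "inner v w = (\<Sum>i<dim_vec v. cnj (v $ i) * w $ i)"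

definition orthonormal :: "nat \<Rightarrow> (nat \<Rightarrow> complex vec) \<Rightarrow> nat \<Rightarrow> bool" where
  "orthonormal n vs c \<longleftrightarrow> (\<forall>j<c. vs j \<in> carrier_vec n) \<and>
     (\<forall>j<c. \<forall>l<c. inner (vs j) (vs l) = (if j = l then 1 else 0))"

text \<open>An orthonormal basis of C^n: n orthonormal vectors (which necessarily span C^n).\<close>
definition orthonormal_basis :: "nat \<Rightarrow> (nat \<Rightarrow> complex vec) \<Rightarrow> bool" where
  "orthonormal_basis n vs \<longleftrightarrow> orthonormal n vs n"

definition psd :: "nat \<Rightarrow> complex mat \<Rightarrow> bool" where
  "psd n M \<longleftrightarrow> M \<in> carrier_mat n n \<and> adj M = M \<and>
     (\<forall>v\<in>carrier_vec n. 0 \<le> Re (inner v (M *\<^sub>v v)) \<and> Im (inner v (M *\<^sub>v v)) = 0)"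

text \<open>Kronecker (tensor) products; index (x,y) of C^a \<otimes> C^b is x*b+y.\<close>
definition kron :: "complex mat \<Rightarrow> complex mat \<Rightarrow> complex mat" where
  "kron A B = mat (dim_row A * dim_row B) (dim_col A * dim_col B)
     (\<lambda>(i,j). A $$ (i div dim_row B, j div dim_col B) * B $$ (i mod dim_row B, j mod dim_col B))"

definition kron_vec :: "complex vec \<Rightarrow> complex vec \<Rightarrow> complex vec" where
  "kron_vec v w = vec (dim_vec v * dim_vec w) (\<lambda>i. v $ (i div dim_vec w) * w $ (i mod dim_vec w))"

definition ment_vec :: "nat \<Rightarrow> (nat \<Rightarrow> complex vec) \<Rightarrow> (nat \<Rightarrow> complex vec) \<Rightarrow> complex vec" where
  "ment_vec D ps ph = vec (D * D) (\<lambda>r. \<Sum>j<D. kron_vec (ps j) (ph j) $ r)"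

definition blk_off :: "(nat \<Rightarrow> nat) \<Rightarrow> nat \<Rightarrow> nat" where
  "blk_off d i = (\<Sum>j<i. d j * d j)"

definition blk_of :: "(nat \<Rightarrow> nat) \<Rightarrow> nat \<Rightarrow> nat" where
  "blk_of d r = (LEAST i. r < blk_off d (Suc i))"

definition blk_vec :: "nat \<Rightarrow> (nat \<Rightarrow> nat) \<Rightarrow> (nat \<Rightarrow> complex vec) \<Rightarrow> complex vec" where
  "blk_vec k d v = vec (blk_off d k) (\<lambda>r. v (blk_of d r) $ (r - blk_off d (blk_of d r)))"

definition blk_diag :: "nat \<Rightarrow> (nat \<Rightarrow> nat) \<Rightarrow> (nat \<Rightarrow> complex mat) \<Rightarrow> complex mat" where
  "blk_diag k d B = mat (blk_off d k) (blk_off d k) (\<lambda>(r,s).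
     if blk_of d r = blk_of d s
     then B (blk_of d r) $$ (r - blk_off d (blk_of d r), s - blk_off d (blk_of d s))
     else 0)"

definition mat_rep :: "('g, 'b) monoid_scheme \<Rightarrow> nat \<Rightarrow> ('g \<Rightarrow> complex mat) \<Rightarrow> bool" where
  "mat_rep G n U \<longleftrightarrow> (\<forall>g\<in>carrier G. U g \<in> carrier_mat n n) \<and> U \<one>\<^bsub>G\<^esub> = 1\<^sub>m n \<and>
     (\<forall>g\<in>carrier G. \<forall>h\<in>carrier G. U (g \<otimes>\<^bsub>G\<^esub> h) = U g * U h)"

definition unitary_rep :: "('g, 'b) monoid_scheme \<Rightarrow> nat \<Rightarrow> ('g \<Rightarrow> complex mat) \<Rightarrow> bool" where
  "unitary_rep G n U \<longleftrightarrow> mat_rep G n U \<and> (\<forall>g\<in>carrier G. unitary_mat n (U g))"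

definition subspace :: "nat \<Rightarrow> complex vec set \<Rightarrow> bool" where
  "subspace n S \<longleftrightarrow> S \<subseteq> carrier_vec n \<and> 0\<^sub>v n \<in> S \<and>
     (\<forall>v\<in>S. \<forall>w\<in>S. v + w \<in> S) \<and> (\<forall>c. \<forall>v\<in>S. c \<cdot>\<^sub>v v \<in> S)"

definition invariant_subspace ::
  "('g, 'b) monoid_scheme \<Rightarrow> nat \<Rightarrow> ('g \<Rightarrow> complex mat) \<Rightarrow> complex vec set \<Rightarrow> bool" where
  "invariant_subspace G n U S \<longleftrightarrow> subspace n S \<and> (\<forall>g\<in>carrier G. \<forall>v\<in>S. U g *\<^sub>v v \<in> S)"

definition irreducible_rep :: "('g, 'b) monoid_scheme \<Rightarrow> nat \<Rightarrow> ('g \<Rightarrow> complex mat) \<Rightarrow> bool" where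
  "irreducible_rep G n U \<longleftrightarrow> mat_rep G n U \<and> 0 < n \<and>
     (\<forall>S. invariant_subspace G n U S \<longrightarrow> S = {0\<^sub>v n} \<or> S = carrier_vec n)"

definition equiv_rep ::
  "('g, 'b) monoid_scheme \<Rightarrow> nat \<Rightarrow> ('g \<Rightarrow> complex mat) \<Rightarrow> nat \<Rightarrow> ('g \<Rightarrow> complex mat) \<Rightarrow> bool" where
  "equiv_rep G n U n' V \<longleftrightarrow> n = n' \<and>
     (\<exists>T\<in>carrier_mat n n. invertible_mat T \<and> (\<forall>g\<in>carrier G. T * U g = V g * T))"

end

theory Submission
  imports Defs "Jordan_Normal_Form.Char_Poly"
begin

text \<open>Choose unit phases z_mu with sum_mu z_mu d_mu a_mu = 0. They exist because the hypothesis
  on mu_0 says that the numbers d_mu |a_mu| are the side lengths of a closed polygon in the plane.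
  Let phi be the direct sum of the vectors sqrt(d_mu) cnj(z_mu) |V_mu>> and w_g = (U_g (x) I) phi.
  Then <w_g|u_g> = <phi|psi> = sum_mu z_mu d_mu a_mu = 0. On the other hand the operator
  sum_g |w_g><w_g| commutes with the representation, and the Schur orthogonality relations
  (the irreducible blocks are pairwise inequivalent and each block of phi is maximally entangled
  with squared norm d_mu^2) show that it equals |G| I. So M_g = |w_g><w_g| / |G| is a POVM that
  excludes u_g.\<close>

lemma adj_dim [simp]: "dim_row (adj A) = dim_col A" "dim_col (adj A) = dim_row A"
  unfolding adj_def by auto

lemma adj_index [simp]: "i < dim_col A \<Longrightarrow> j < dim_row A \<Longrightarrow> adj A $$ (i,j) = cnj (A $$ (j,i))"
  unfolding adj_def by auto

lemma adj_carrier [simp]: "A \<in> carrier_mat r c \<Longrightarrow> adj A \<in> carrier_mat c r"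
  unfolding adj_def by auto

lemma adj_adj [simp]: "adj (adj A) = A"
  by (rule eq_matI) auto

lemma adj_zero [simp]: "adj (0\<^sub>m a b) = 0\<^sub>m b a"
  by (rule eq_matI) auto

lemma adj_mult:
  assumes "A \<in> carrier_mat a b" "B \<in> carrier_mat b c"
  shows "adj (A * B) = adj B * adj A"
  by (rule eq_matI) (use assms in \<open>auto simp: scalar_prod_def mult.commute\<close>)

lemma assoc_mult_mat_dims:
  "dim_col (A :: 'a :: semiring_0 mat) = dim_row B \<Longrightarrow> dim_col B = dim_row C \<Longrightarrow> A * B * C = A * (B * C)"
  by (metis assoc_mult_mat carrier_matI)

lemma smult_smult_mat [simp]: "a \<cdot>\<^sub>m (b \<cdot>\<^sub>m A) = (a * b :: 'a :: semigroup_mult) \<cdot>\<^sub>m A"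
  by (rule eq_matI) (auto simp: mult.assoc)

lemma one_smult_mat [simp]: "(1 :: 'a :: monoid_mult) \<cdot>\<^sub>m A = A"
  by (rule eq_matI) auto

lemma cnj_mult_self: "cnj z * z = complex_of_real ((cmod z)\<^sup>2)"
  by (metis complex_norm_square mult.commute)

lemma adj_mult_self_eq_zero:
  assumes X: "X \<in> carrier_mat r c" and Z: "adj X * X = 0\<^sub>m c c"
  shows "X = 0\<^sub>m r c"
proof (rule eq_matI)
  fix p q assume "p < dim_row (0\<^sub>m r c)" and "q < dim_col (0\<^sub>m r c)"
  hence p: "p < r" and q: "q < c" by auto
  have "(adj X * X) $$ (q,q) = (\<Sum>i<r. complex_of_real ((cmod (X $$ (i,q)))\<^sup>2))"
    using X q by (auto simp: scalar_prod_def atLeast0LessThan cnj_mult_self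
        simp del: of_real_power intro!: sum.cong)
  hence "(\<Sum>i<r. complex_of_real ((cmod (X $$ (i,q)))\<^sup>2)) = 0" using Z q by simp
  hence "(\<Sum>i<r. (cmod (X $$ (i,q)))\<^sup>2) = 0" by (simp only: of_real_sum[symmetric] of_real_eq_0_iff)
  hence "\<forall>i\<in>{..<r}. (cmod (X $$ (i,q)))\<^sup>2 = 0" by (subst (asm) sum_nonneg_eq_0_iff) auto
  thus "X $$ (p,q) = 0\<^sub>m r c $$ (p,q)" using p q by auto
qed (use X in auto)

lemma smult_mat_cancel:
  assumes "c \<cdot>\<^sub>m X = c' \<cdot>\<^sub>m X" "X \<in> carrier_mat r s" "X \<noteq> 0\<^sub>m r s"
  shows "c = (c' :: complex)"
proof -
  from assms(2,3) obtain i j where ij: "i < r" "j < s" "X $$ (i,j) \<noteq> 0"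
    by (metis (no_types, lifting) carrier_matD eq_matI index_zero_mat(1,2,3))
  have "(c \<cdot>\<^sub>m X) $$ (i,j) = (c' \<cdot>\<^sub>m X) $$ (i,j)" using assms(1) by simp
  thus ?thesis using ij assms(2) by auto
qed

definition trace :: "complex mat \<Rightarrow> complex" where
  "trace A = (\<Sum>i<dim_row A. A $$ (i,i))"

lemma trace_comm:
  assumes "A \<in> carrier_mat a b" "B \<in> carrier_mat b a"
  shows "trace (A * B) = trace (B * A)"
proof -
  have "trace (A * B) = (\<Sum>i<a. \<Sum>j<b. A $$ (i,j) * B $$ (j,i))"
    using assms unfolding trace_def by (auto simp: scalar_prod_def atLeast0LessThan)
  also have "\<dots> = (\<Sum>j<b. \<Sum>i<a. B $$ (j,i) * A $$ (i,j))"
    by (subst sum.swap) (simp add: mult.commute)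
  also have "\<dots> = trace (B * A)"
    using assms unfolding trace_def by (auto simp: scalar_prod_def atLeast0LessThan)
  finally show ?thesis .
qed

lemma trace_smult_one_mat: "trace (c \<cdot>\<^sub>m 1\<^sub>m n) = of_nat n * c"
  unfolding trace_def by simp

text \<open>Matrices carry their dimensions and the type of matrices has no zero, so finite sums of
  matrices are taken entrywise, with the dimensions given explicitly.\<close>

definition mat_sum :: "('g \<Rightarrow> complex mat) \<Rightarrow> 'g set \<Rightarrow> nat \<Rightarrow> nat \<Rightarrow> complex mat" where
  "mat_sum F I r c = mat r c (\<lambda>(p,q). \<Sum>g\<in>I. F g $$ (p,q))"

lemma mat_sum_carrier [simp]: "mat_sum F I r c \<in> carrier_mat r c"
  unfolding mat_sum_def by auto

lemma mat_sum_dim [simp]: "dim_row (mat_sum F I r c) = r" "dim_col (mat_sum F I r c) = c"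
  unfolding mat_sum_def by auto

lemma mat_sum_cong: "(\<And>g. g \<in> I \<Longrightarrow> F g = F' g) \<Longrightarrow> mat_sum F I r c = mat_sum F' I r c"
  unfolding mat_sum_def by (auto intro!: sum.cong)

lemma mat_sum_mult_right:
  assumes "\<And>g. g \<in> I \<Longrightarrow> F g \<in> carrier_mat r c" "B \<in> carrier_mat c e"
  shows "mat_sum F I r c * B = mat_sum (\<lambda>g. F g * B) I r e"
proof (rule eq_matI)
  fix i j assume "i < dim_row (mat_sum (\<lambda>g. F g * B) I r e)" "j < dim_col (mat_sum (\<lambda>g. F g * B) I r e)"
  hence i: "i < r" and j: "j < e" by auto
  have "(mat_sum F I r c * B) $$ (i,j) = (\<Sum>k<c. (\<Sum>g\<in>I. F g $$ (i,k)) * B $$ (k,j))"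
    using i j assms by (auto simp: mat_sum_def scalar_prod_def atLeast0LessThan)
  also have "\<dots> = (\<Sum>g\<in>I. \<Sum>k<c. F g $$ (i,k) * B $$ (k,j))"
    by (simp add: sum_distrib_right sum.swap[of _ I])
  also have "\<dots> = mat_sum (\<lambda>g. F g * B) I r e $$ (i,j)"
  proof -
    have "(F g * B) $$ (i,j) = (\<Sum>k<c. F g $$ (i,k) * B $$ (k,j))" if "g \<in> I" for g
      using assms(1)[OF that] assms(2) i j by (auto simp: scalar_prod_def atLeast0LessThan)
    thus ?thesis using i j by (auto simp: mat_sum_def intro!: sum.cong)
  qed
  finally show "(mat_sum F I r c * B) $$ (i,j) = mat_sum (\<lambda>g. F g * B) I r e $$ (i,j)" .
qed (use assms in auto)

lemma mat_sum_mult_left: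
  assumes "\<And>g. g \<in> I \<Longrightarrow> F g \<in> carrier_mat r c" "B \<in> carrier_mat e r"
  shows "B * mat_sum F I r c = mat_sum (\<lambda>g. B * F g) I e c"
proof (rule eq_matI)
  fix i j assume "i < dim_row (mat_sum (\<lambda>g. B * F g) I e c)" "j < dim_col (mat_sum (\<lambda>g. B * F g) I e c)"
  hence i: "i < e" and j: "j < c" by auto
  have "(B * mat_sum F I r c) $$ (i,j) = (\<Sum>k<r. B $$ (i,k) * (\<Sum>g\<in>I. F g $$ (k,j)))"
    using i j assms by (auto simp: mat_sum_def scalar_prod_def atLeast0LessThan)
  also have "\<dots> = (\<Sum>g\<in>I. \<Sum>k<r. B $$ (i,k) * F g $$ (k,j))"
    by (simp add: sum_distrib_left sum.swap[of _ I])
  also have "\<dots> = mat_sum (\<lambda>g. B * F g) I e c $$ (i,j)"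
  proof -
    have "(B * F g) $$ (i,j) = (\<Sum>k<r. B $$ (i,k) * F g $$ (k,j))" if "g \<in> I" for g
      using assms(1)[OF that] assms(2) i j by (auto simp: scalar_prod_def atLeast0LessThan)
    thus ?thesis using i j by (auto simp: mat_sum_def intro!: sum.cong)
  qed
  finally show "(B * mat_sum F I r c) $$ (i,j) = mat_sum (\<lambda>g. B * F g) I e c $$ (i,j)" .
qed (use assms in auto)

lemma trace_mat_sum:
  assumes "\<And>g. g \<in> I \<Longrightarrow> F g \<in> carrier_mat r r"
  shows "trace (mat_sum F I r r) = (\<Sum>g\<in>I. trace (F g))"
proof -
  have "trace (F g) = (\<Sum>i<r. F g $$ (i,i))" if "g \<in> I" for g
    using assms[OF that] unfolding trace_def by auto
  thus ?thesis unfolding trace_def mat_sum_def by (auto simp: sum.swap[of _ I])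
qed

lemma inner_commute_cnj: "dim_vec v = dim_vec w \<Longrightarrow> inner v w = cnj (inner w v)"
  unfolding inner_def by (simp add: mult.commute)

lemma inner_smult:
  "v \<in> carrier_vec n \<Longrightarrow> w \<in> carrier_vec n \<Longrightarrow> inner (c \<cdot>\<^sub>v v) (c' \<cdot>\<^sub>v w) = cnj c * c' * inner v w"
  unfolding inner_def by (auto simp: sum_distrib_left mult_ac intro!: sum.cong)

lemma inner_smult_right: "v \<in> carrier_vec n \<Longrightarrow> w \<in> carrier_vec n \<Longrightarrow> inner v (c \<cdot>\<^sub>v w) = c * inner v w"
  unfolding inner_def by (auto simp: sum_distrib_left mult_ac intro!: sum.cong)

lemma inner_mult_mat_vec_adj:
  assumes A: "A \<in> carrier_mat r c" and v: "v \<in> carrier_vec c" and u: "u \<in> carrier_vec r"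
  shows "inner (A *\<^sub>v v) u = inner v (adj A *\<^sub>v u)"
proof -
  have "inner (A *\<^sub>v v) u = (\<Sum>p<r. \<Sum>a<c. cnj (A $$ (p,a)) * cnj (v $ a) * u $ p)"
    using A v u unfolding inner_def
    by (auto simp: scalar_prod_def atLeast0LessThan sum_distrib_right intro!: sum.cong)
  also have "\<dots> = (\<Sum>a<c. \<Sum>p<r. cnj (A $$ (p,a)) * cnj (v $ a) * u $ p)" by (rule sum.swap)
  also have "\<dots> = inner v (adj A *\<^sub>v u)"
    using A v u unfolding inner_def
    by (auto simp: scalar_prod_def atLeast0LessThan sum_distrib_left mult_ac intro!: sum.cong)
  finally show ?thesis .
qed

lemma inner_isometry:
  assumes A: "A \<in> carrier_mat r c" and AA: "adj A * A = 1\<^sub>m c"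
    and v: "v \<in> carrier_vec c" and w: "w \<in> carrier_vec c"
  shows "inner (A *\<^sub>v v) (A *\<^sub>v w) = inner v w"
proof -
  have "inner (A *\<^sub>v v) (A *\<^sub>v w) = inner v (adj A *\<^sub>v (A *\<^sub>v w))"
    using inner_mult_mat_vec_adj[OF A v] A w by simp
  also have "adj A *\<^sub>v (A *\<^sub>v w) = (adj A * A) *\<^sub>v w"
    using A w by (simp add: assoc_mult_mat_vec[of _ c r _ c])
  finally show ?thesis using AA w by simp
qed

lemma orthonormal_isometry_image:
  assumes "A \<in> carrier_mat D D" "adj A * A = 1\<^sub>m D" "orthonormal D vs D"
  shows "orthonormal D (\<lambda>l. A *\<^sub>v vs l) D"
  using assms inner_isometry[OF assms(1,2)] unfolding orthonormal_def by auto

lemma orthonormal_basis_complete: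
  assumes onb: "orthonormal_basis D vs" and q: "q < D" and q': "q' < D"
  shows "(\<Sum>l<D. vs l $ q * cnj (vs l $ q')) = (if q = q' then 1 else 0)"
proof -
  have vsc: "\<And>j. j < D \<Longrightarrow> vs j \<in> carrier_vec D"
    and orth: "\<And>j l. j < D \<Longrightarrow> l < D \<Longrightarrow> inner (vs j) (vs l) = (if j = l then 1 else 0)"
    using onb unfolding orthonormal_basis_def orthonormal_def by auto
  define P where "P = mat D D (\<lambda>(q,l). vs l $ q)"
  have Pc: "P \<in> carrier_mat D D" unfolding P_def by simp
  have "adj P * P = 1\<^sub>m D"
  proof (rule eq_matI)
    fix i j assume "i < dim_row (1\<^sub>m D)" "j < dim_col (1\<^sub>m D)"
    hence ij: "i < D" "j < D" by auto
    have "(adj P * P) $$ (i,j) = inner (vs i) (vs j)"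
      using ij Pc vsc[OF ij(1)] unfolding P_def inner_def by (auto simp: scalar_prod_def atLeast0LessThan)
    thus "(adj P * P) $$ (i,j) = 1\<^sub>m D $$ (i,j)" using orth[OF ij] ij by simp
  qed (use Pc in auto)
  hence "P * adj P = 1\<^sub>m D" by (rule mat_mult_left_right_inverse[OF adj_carrier[OF Pc] Pc])
  moreover have "(P * adj P) $$ (q,q') = (\<Sum>l<D. vs l $ q * cnj (vs l $ q'))"
    using q q' Pc unfolding P_def by (auto simp: scalar_prod_def atLeast0LessThan)
  ultimately show ?thesis using q q' by simp
qed

definition outer :: "complex vec \<Rightarrow> complex vec \<Rightarrow> complex mat" where
  "outer v w = mat (dim_vec v) (dim_vec w) (\<lambda>(a,b). v $ a * cnj (w $ b))"

lemma outer_carrier [simp]: "v \<in> carrier_vec r \<Longrightarrow> w \<in> carrier_vec c \<Longrightarrow> outer v w \<in> carrier_mat r c"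
  unfolding outer_def by auto

lemma mult_outer:
  assumes "A \<in> carrier_mat r c" "v \<in> carrier_vec c"
  shows "A * outer v w = outer (A *\<^sub>v v) w"
  by (rule eq_matI) (use assms in \<open>auto simp: outer_def scalar_prod_def sum_distrib_right mult.assoc\<close>)

lemma outer_mult_adj:
  assumes "B \<in> carrier_mat c c'" "w \<in> carrier_vec c'"
  shows "outer v w * adj B = outer v (B *\<^sub>v w)"
  by (rule eq_matI)
    (use assms in \<open>auto simp: outer_def scalar_prod_def sum_distrib_left mult.assoc mult.commute
      intro!: sum.cong\<close>)

lemma trace_outer:
  assumes "v \<in> carrier_vec c" "w \<in> carrier_vec c"
  shows "trace (outer v w) = inner w v"
  using assms unfolding trace_def outer_def inner_def by (auto simp: mult.commute)

lemma mat_sum_outer_mult: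
  assumes Y: "\<And>g. g \<in> I \<Longrightarrow> Y g \<in> carrier_vec c" and A: "A \<in> carrier_mat r c"
  shows "mat_sum (\<lambda>g. outer (A *\<^sub>v Y g) (A *\<^sub>v Y g)) I r r = A * mat_sum (\<lambda>g. outer (Y g) (Y g)) I c c * adj A"
proof -
  have "A * mat_sum (\<lambda>g. outer (Y g) (Y g)) I c c * adj A
      = mat_sum (\<lambda>g. A * outer (Y g) (Y g) * adj A) I r r"
    using A Y by (simp add: mat_sum_mult_left mat_sum_mult_right[where c = c])
  also have "\<dots> = mat_sum (\<lambda>g. outer (A *\<^sub>v Y g) (A *\<^sub>v Y g)) I r r"
    using A Y by (intro mat_sum_cong) (simp add: mult_outer outer_mult_adj)
  finally show ?thesis by simp
qed

lemma inner_smult_outer_self: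
  assumes w: "w \<in> carrier_vec N" and v: "v \<in> carrier_vec N"
  shows "inner v ((c \<cdot>\<^sub>m outer w w) *\<^sub>v v) = c * complex_of_real ((cmod (inner w v))\<^sup>2)"
proof -
  have "(c \<cdot>\<^sub>m outer w w) *\<^sub>v v = (c * inner w v) \<cdot>\<^sub>v w"
    by (rule eq_vecI)
      (use w v in \<open>auto simp: outer_def inner_def scalar_prod_def atLeast0LessThan sum_distrib_left mult_ac\<close>)
  hence "inner v ((c \<cdot>\<^sub>m outer w w) *\<^sub>v v) = c * inner w v * inner v w"
    using inner_smult_right[OF v w] by simp
  also have "inner v w = cnj (inner w v)" using v w by (intro inner_commute_cnj) simp
  finally show ?thesis by (simp only: complex_norm_square mult.assoc)
qed

lemma psd_smult_outer_self:
  assumes w: "w \<in> carrier_vec N" and c: "0 \<le> c"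
  shows "psd N (complex_of_real c \<cdot>\<^sub>m outer w w)"
  unfolding psd_def
proof (intro conjI ballI)
  show "complex_of_real c \<cdot>\<^sub>m outer w w \<in> carrier_mat N N" using w by simp
  show "adj (complex_of_real c \<cdot>\<^sub>m outer w w) = complex_of_real c \<cdot>\<^sub>m outer w w"
    by (rule eq_matI) (use w in \<open>auto simp: outer_def\<close>)
  fix v :: "complex vec" assume v: "v \<in> carrier_vec N"
  show "0 \<le> Re (inner v ((complex_of_real c \<cdot>\<^sub>m outer w w) *\<^sub>v v))"
    using inner_smult_outer_self[OF w v] c by simp
  show "Im (inner v ((complex_of_real c \<cdot>\<^sub>m outer w w) *\<^sub>v v)) = 0"
    using inner_smult_outer_self[OF w v] by simp
qed

lemma sum_mult_cnj_sum:
  "(\<Sum>g\<in>S. (\<Sum>l\<in>A. f g l) * cnj (\<Sum>l'\<in>B. h g l')) = (\<Sum>l\<in>A. \<Sum>l'\<in>B. \<Sum>g\<in>S. f g l * cnj (h g l'))"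
proof -
  have "(\<Sum>g\<in>S. (\<Sum>l\<in>A. f g l) * cnj (\<Sum>l'\<in>B. h g l')) = (\<Sum>g\<in>S. \<Sum>l\<in>A. \<Sum>l'\<in>B. f g l * cnj (h g l'))"
    by (simp add: sum_product)
  also have "\<dots> = (\<Sum>l\<in>A. \<Sum>g\<in>S. \<Sum>l'\<in>B. f g l * cnj (h g l'))"
    by (rule sum.swap)
  also have "\<dots> = (\<Sum>l\<in>A. \<Sum>l'\<in>B. \<Sum>g\<in>S. f g l * cnj (h g l'))"
    by (rule sum.cong[OF refl], rule sum.swap)
  finally show ?thesis .
qed

section \<open>Schur's lemma and the Schur orthogonality relations\<close>

lemma schur_lemma_scalar:
  assumes irr: "irreducible_rep G d V" and T: "T \<in> carrier_mat d d"
    and comm: "\<And>g. g \<in> carrier G \<Longrightarrow> T * V g = V g * T"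
  shows "\<exists>c. T = c \<cdot>\<^sub>m 1\<^sub>m d"
proof -
  have d: "d > 0" and rep: "mat_rep G d V"
    and inv: "\<And>S. invariant_subspace G d V S \<Longrightarrow> S = {0\<^sub>v d} \<or> S = carrier_vec d"
    using irr unfolding irreducible_rep_def by auto
  have Vc: "\<And>g. g \<in> carrier G \<Longrightarrow> V g \<in> carrier_mat d d" using rep unfolding mat_rep_def by auto
  have "degree (char_poly T) > 0" using degree_monic_char_poly[OF T] d by auto
  hence "\<not> constant (poly (char_poly T))" by (simp add: constant_degree)
  from fundamental_theorem_of_algebra[OF this] obtain c where "poly (char_poly T) c = 0" by auto
  hence "eigenvalue T c" using eigenvalue_root_char_poly[OF T] by auto
  then obtain v where "eigenvector T v c" unfolding eigenvalue_def by auto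
  hence v: "v \<in> carrier_vec d" "v \<noteq> 0\<^sub>v d" "T *\<^sub>v v = c \<cdot>\<^sub>v v" using T unfolding eigenvector_def by auto
  define S where "S = {w \<in> carrier_vec d. T *\<^sub>v w = c \<cdot>\<^sub>v w}"
  have "V g *\<^sub>v x \<in> S" if g: "g \<in> carrier G" and x: "x \<in> S" for g x
  proof -
    have xc: "x \<in> carrier_vec d" and Tx: "T *\<^sub>v x = c \<cdot>\<^sub>v x" using x unfolding S_def by auto
    have "T *\<^sub>v (V g *\<^sub>v x) = (T * V g) *\<^sub>v x" using T Vc[OF g] xc by auto
    also have "\<dots> = V g *\<^sub>v (T *\<^sub>v x)" using comm[OF g] T Vc[OF g] xc by auto
    also have "\<dots> = c \<cdot>\<^sub>v (V g *\<^sub>v x)" using xc Vc[OF g] Tx by (auto simp: mult_mat_vec)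
    finally show ?thesis using Vc[OF g] xc unfolding S_def by auto
  qed
  hence "invariant_subspace G d V S"
    using T unfolding invariant_subspace_def subspace_def S_def
    by (auto simp: mult_add_distrib_mat_vec smult_add_distrib_vec mult_mat_vec smult_smult_assoc mult.commute)
  hence "S = carrier_vec d" using inv v unfolding S_def by auto
  hence all: "\<And>w. w \<in> carrier_vec d \<Longrightarrow> T *\<^sub>v w = c \<cdot>\<^sub>v w" unfolding S_def by auto
  show ?thesis
  proof (intro exI eq_matI)
    fix i j assume i: "i < dim_row (c \<cdot>\<^sub>m 1\<^sub>m d)" and j: "j < dim_col (c \<cdot>\<^sub>m 1\<^sub>m d)"
    have "T $$ (i, j) = (T *\<^sub>v unit_vec d j) $ i" using T i j by simp
    also have "\<dots> = (c \<cdot>\<^sub>v unit_vec d j) $ i" using all[of "unit_vec d j"] by simp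
    finally show "T $$ (i, j) = (c \<cdot>\<^sub>m 1\<^sub>m d) $$ (i, j)" using i j by simp
  qed (use T in auto)
qed

lemma unitary_repD:
  assumes "unitary_rep G d V" "g \<in> carrier G"
  shows "V g \<in> carrier_mat d d" "adj (V g) * V g = 1\<^sub>m d" "V g * adj (V g) = 1\<^sub>m d"
  using assms unfolding unitary_rep_def mat_rep_def unitary_mat_def by auto

lemma unitary_rep_mult:
  "unitary_rep G d V \<Longrightarrow> g \<in> carrier G \<Longrightarrow> h \<in> carrier G \<Longrightarrow> V (g \<otimes>\<^bsub>G\<^esub> h) = V g * V h"
  unfolding unitary_rep_def mat_rep_def by auto

lemma unitary_rep_inv:
  assumes grp: "group G" and V: "unitary_rep G d V" and g: "g \<in> carrier G"
  shows "V (inv\<^bsub>G\<^esub> g) = adj (V g)"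
proof -
  have ig: "inv\<^bsub>G\<^esub> g \<in> carrier G" using group.inv_closed[OF grp g] .
  have Vone: "V \<one>\<^bsub>G\<^esub> = 1\<^sub>m d" using V unfolding unitary_rep_def mat_rep_def by auto
  have inv_mult: "V (inv\<^bsub>G\<^esub> g) * V g = 1\<^sub>m d"
    using unitary_rep_mult[OF V ig g, symmetric] group.l_inv[OF grp g] Vone by simp
  have "V (inv\<^bsub>G\<^esub> g) = V (inv\<^bsub>G\<^esub> g) * (V g * adj (V g))"
    using unitary_repD[OF V g] unitary_repD[OF V ig] by simp
  also have "\<dots> = (V (inv\<^bsub>G\<^esub> g) * V g) * adj (V g)"
    using unitary_repD[OF V g] unitary_repD[OF V ig] by (simp add: assoc_mult_mat[of _ d d _ d _ d])
  finally show ?thesis using inv_mult unitary_repD[OF V g] by simp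
qed

lemma sum_group_translate:
  assumes grp: "group G" and h: "h \<in> carrier G"
  shows "(\<Sum>g\<in>carrier G. f (h \<otimes>\<^bsub>G\<^esub> g)) = (\<Sum>g\<in>carrier G. f g)"
proof -
  interpret group G by fact
  have "bij_betw (\<lambda>g. h \<otimes>\<^bsub>G\<^esub> g) (carrier G) (carrier G)"
    by (rule bij_betw_byWitness[where f' = "\<lambda>g. inv\<^bsub>G\<^esub> h \<otimes>\<^bsub>G\<^esub> g"])
      (use h in \<open>auto simp: m_assoc[symmetric]\<close>)
  from sum.reindex_bij_betw[OF this] show ?thesis .
qed

definition twirl :: "('g, 'b) monoid_scheme \<Rightarrow> ('g \<Rightarrow> complex mat) \<Rightarrow> ('g \<Rightarrow> complex mat)
   \<Rightarrow> complex mat \<Rightarrow> nat \<Rightarrow> nat \<Rightarrow> complex mat" where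
  "twirl G V V' A d d' = mat_sum (\<lambda>g. V g * A * adj (V' g)) (carrier G) d d'"

lemma twirl_carrier [simp]: "twirl G V V' A d d' \<in> carrier_mat d d'"
  unfolding twirl_def by simp

lemma twirl_intertwines:
  assumes grp: "group G" and V: "unitary_rep G d V" and V': "unitary_rep G d' V'"
    and A: "A \<in> carrier_mat d d'" and h: "h \<in> carrier G"
  shows "twirl G V V' A d d' * V' h = V h * twirl G V V' A d d'"
proof -
  let ?S = "twirl G V V' A d d'"
  note Vh = unitary_repD[OF V h] and V'h = unitary_repD[OF V' h]
  have Fc: "\<And>g. g \<in> carrier G \<Longrightarrow> V g * A * adj (V' g) \<in> carrier_mat d d'"
    using A unitary_repD[OF V] unitary_repD[OF V'] by (meson adj_carrier mult_carrier_mat)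
  have "V h * ?S * adj (V' h) = mat_sum (\<lambda>g. V h * (V g * A * adj (V' g)) * adj (V' h)) (carrier G) d d'"
    unfolding twirl_def
    by (subst mat_sum_mult_left[OF Fc Vh(1)], simp, subst mat_sum_mult_right[where c = d'])
      (use Fc Vh V'h in auto)
  also have "\<dots> = mat_sum (\<lambda>g. V (h \<otimes>\<^bsub>G\<^esub> g) * A * adj (V' (h \<otimes>\<^bsub>G\<^esub> g))) (carrier G) d d'"
  proof (rule mat_sum_cong)
    fix g assume g: "g \<in> carrier G"
    note Vg = unitary_repD[OF V g] and V'g = unitary_repD[OF V' g]
    have "V (h \<otimes>\<^bsub>G\<^esub> g) * A * adj (V' (h \<otimes>\<^bsub>G\<^esub> g)) = V h * V g * A * (adj (V' g) * adj (V' h))"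
      using unitary_rep_mult[OF V h g] unitary_rep_mult[OF V' h g] adj_mult[OF V'h(1) V'g(1)] by simp
    also have "\<dots> = V h * (V g * A * adj (V' g)) * adj (V' h)"
      using Vg(1) Vh(1) V'g(1) V'h(1) A by (simp add: assoc_mult_mat_dims carrier_matD)
    finally show "V h * (V g * A * adj (V' g)) * adj (V' h)
        = V (h \<otimes>\<^bsub>G\<^esub> g) * A * adj (V' (h \<otimes>\<^bsub>G\<^esub> g))" by simp
  qed
  also have "\<dots> = ?S"
    unfolding twirl_def mat_sum_def
    by (rule cong[of "mat d d'"], simp, rule ext, clarify,
        rule sum_group_translate[OF grp h, where f = "\<lambda>g. (V g * A * adj (V' g)) $$ _"])
  finally have eq: "V h * ?S * adj (V' h) = ?S" .
  have Sc: "?S \<in> carrier_mat d d'" by simp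
  have "?S * V' h = V h * ?S * adj (V' h) * V' h" using eq by simp
  also have "\<dots> = V h * ?S * (adj (V' h) * V' h)"
    by (rule assoc_mult_mat[of _ d d' _ d' _ d']) (use Sc Vh(1) V'h(1) in auto)
  finally show ?thesis using V'h Sc Vh by simp
qed

lemma twirl_irreducible:
  assumes grp: "group G" and V: "unitary_rep G d V" and irr: "irreducible_rep G d V"
    and A: "A \<in> carrier_mat d d"
  shows "twirl G V V A d d = (of_nat (card (carrier G)) * trace A / of_nat d) \<cdot>\<^sub>m 1\<^sub>m d"
proof -
  let ?S = "twirl G V V A d d"
  have d: "d > 0" using irr unfolding irreducible_rep_def by auto
  obtain c where c: "?S = c \<cdot>\<^sub>m 1\<^sub>m d"
    using schur_lemma_scalar[OF irr twirl_carrier twirl_intertwines[OF grp V V A]] by blast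
  have Fc: "\<And>g. g \<in> carrier G \<Longrightarrow> V g * A * adj (V g) \<in> carrier_mat d d"
    using A unitary_repD[OF V] by (meson adj_carrier mult_carrier_mat)
  have "trace ?S = (\<Sum>g\<in>carrier G. trace (V g * A * adj (V g)))"
    unfolding twirl_def by (rule trace_mat_sum[OF Fc])
  also have "\<dots> = (\<Sum>g\<in>carrier G. trace A)"
  proof (rule sum.cong[OF refl])
    fix g assume g: "g \<in> carrier G"
    note Vg = unitary_repD[OF V g]
    have "trace (V g * A * adj (V g)) = trace (adj (V g) * (V g * A))"
      by (rule trace_comm[of _ d d]) (use Vg A in auto)
    also have "\<dots> = trace A" using Vg A by (simp add: assoc_mult_mat_dims[symmetric] carrier_matD)
    finally show "trace (V g * A * adj (V g)) = trace A" .
  qed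
  finally have "of_nat d * c = of_nat (card (carrier G)) * trace A"
    using c trace_smult_one_mat by simp
  hence "c = of_nat (card (carrier G)) * trace A / of_nat d" using d by (simp add: field_simps)
  thus ?thesis using c by simp
qed

lemma intertwiner_adj:
  assumes grp: "group G" and V: "unitary_rep G d V" and V': "unitary_rep G d' V'"
    and S: "S \<in> carrier_mat d d'" and SV: "\<And>h. h \<in> carrier G \<Longrightarrow> S * V' h = V h * S"
    and h: "h \<in> carrier G"
  shows "adj S * V h = V' h * adj S"
proof -
  have "S * adj (V' h) = adj (V h) * S"
    using SV[OF group.inv_closed[OF grp h]] unitary_rep_inv[OF grp V h] unitary_rep_inv[OF grp V' h] by simp
  hence "adj (S * adj (V' h)) = adj (adj (V h) * S)" by simp
  thus ?thesis
    using adj_mult[OF S adj_carrier[OF unitary_repD(1)[OF V' h]]]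
      adj_mult[OF adj_carrier[OF unitary_repD(1)[OF V h]] S] by simp
qed

lemma intertwiner_comp_scalar:
  assumes irr': "irreducible_rep G d' V'"
    and V: "\<And>h. h \<in> carrier G \<Longrightarrow> V h \<in> carrier_mat d d"
    and V': "\<And>h. h \<in> carrier G \<Longrightarrow> V' h \<in> carrier_mat d' d'"
    and S: "S \<in> carrier_mat d d'" and T: "T \<in> carrier_mat d' d"
    and SV: "\<And>h. h \<in> carrier G \<Longrightarrow> S * V' h = V h * S"
    and TV: "\<And>h. h \<in> carrier G \<Longrightarrow> T * V h = V' h * T"
  shows "\<exists>c. T * S = c \<cdot>\<^sub>m 1\<^sub>m d'"
proof (rule schur_lemma_scalar[OF irr'])
  show "T * S \<in> carrier_mat d' d'" using S T by simp
  fix h assume h: "h \<in> carrier G"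
  note dims = carrier_matD[OF S] carrier_matD[OF T] carrier_matD[OF V[OF h]] carrier_matD[OF V'[OF h]]
  have "T * S * V' h = T * V h * S" using SV[OF h] dims by (simp add: assoc_mult_mat_dims)
  also have "\<dots> = V' h * (T * S)" using TV[OF h] dims by (simp add: assoc_mult_mat_dims)
  finally show "T * S * V' h = V' h * (T * S)" .
qed

lemma nonzero_intertwiner_imp_equiv_rep:
  assumes grp: "group G"
    and V: "unitary_rep G d V" and irr: "irreducible_rep G d V"
    and V': "unitary_rep G d' V'" and irr': "irreducible_rep G d' V'"
    and S: "S \<in> carrier_mat d d'" and nz: "S \<noteq> 0\<^sub>m d d'"
    and SV: "\<And>h. h \<in> carrier G \<Longrightarrow> S * V' h = V h * S"
  shows "equiv_rep G d' V' d V"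
proof -
  have aS: "adj S \<in> carrier_mat d' d" using S by simp
  have aSnz: "adj S \<noteq> 0\<^sub>m d' d" using nz by (metis adj_adj adj_zero)
  have aSV: "\<And>h. h \<in> carrier G \<Longrightarrow> adj S * V h = V' h * adj S"
    by (rule intertwiner_adj[OF grp V V' S SV])
  note Vc = unitary_repD(1)[OF V] and V'c = unitary_repD(1)[OF V']
  obtain l where l: "adj S * S = l \<cdot>\<^sub>m 1\<^sub>m d'"
    using intertwiner_comp_scalar[OF irr' Vc V'c S aS SV aSV] by blast
  obtain m where m: "S * adj S = m \<cdot>\<^sub>m 1\<^sub>m d"
    using intertwiner_comp_scalar[OF irr V'c Vc aS S aSV SV] by (metis adj_adj)
  have l0: "l \<noteq> 0"
  proof
    assume "l = 0"
    hence "adj S * S = 0\<^sub>m d' d'" using l by auto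
    thus False using adj_mult_self_eq_zero[OF S] nz by simp
  qed
  have "adj S * (S * adj S) = (adj S * S) * adj S" using S by (simp add: assoc_mult_mat_dims carrier_matD)
  hence "m \<cdot>\<^sub>m adj S = l \<cdot>\<^sub>m adj S" unfolding l m using aS S
    by (simp add: mult_smult_distrib[OF aS, of _ d] mult_smult_assoc_mat[of _ d' d'] carrier_matD)
  hence ml: "m = l" by (rule smult_mat_cancel[OF _ aS aSnz])
  have "trace (adj S * S) = trace (S * adj S)" by (rule trace_comm[OF aS S])
  hence "of_nat d' * l = of_nat d * l" unfolding l m ml trace_smult_one_mat .
  hence dd: "d' = d" using l0 by simp
  have "invertible_mat S" unfolding invertible_mat_def inverts_mat_def
  proof (intro conjI exI[of _ "(1 / l) \<cdot>\<^sub>m adj S"])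
    show "square_mat S" using S dd by simp
    show "S * ((1 / l) \<cdot>\<^sub>m adj S) = 1\<^sub>m (dim_row S)"
      using mult_smult_distrib[OF S aS] m ml l0 S by simp
    show "((1 / l) \<cdot>\<^sub>m adj S) * S = 1\<^sub>m (dim_row ((1 / l) \<cdot>\<^sub>m adj S))"
      using mult_smult_assoc_mat[OF aS S] l l0 S by simp
  qed
  thus ?thesis unfolding equiv_rep_def using dd S SV by auto
qed

lemma twirl_inequivalent:
  assumes grp: "group G"
    and V: "unitary_rep G d V" and irr: "irreducible_rep G d V"
    and V': "unitary_rep G d' V'" and irr': "irreducible_rep G d' V'"
    and ne: "\<not> equiv_rep G d' V' d V" and A: "A \<in> carrier_mat d d'"
  shows "twirl G V V' A d d' = 0\<^sub>m d d'"
  using nonzero_intertwiner_imp_equiv_rep[OF grp V irr V' irr' twirl_carrier _ twirl_intertwines[OF grp V V' A]] ne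
  by blast

lemma twirl_outer_index:
  assumes V: "unitary_rep G d V" and V': "unitary_rep G d' V'"
    and v: "v \<in> carrier_vec d" and w: "w \<in> carrier_vec d'" and p: "p < d" and q: "q < d'"
  shows "twirl G V V' (outer v w) d d' $$ (p,q) = (\<Sum>g\<in>carrier G. (V g *\<^sub>v v) $ p * cnj ((V' g *\<^sub>v w) $ q))"
proof -
  have "V g * outer v w * adj (V' g) = outer (V g *\<^sub>v v) (V' g *\<^sub>v w)" if "g \<in> carrier G" for g
    using mult_outer[OF unitary_repD(1)[OF V that] v] outer_mult_adj[OF unitary_repD(1)[OF V' that] w] by simp
  moreover have "outer (V g *\<^sub>v v) (V' g *\<^sub>v w) $$ (p,q) = (V g *\<^sub>v v) $ p * cnj ((V' g *\<^sub>v w) $ q)"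
    if "g \<in> carrier G" for g
    using p q unitary_repD(1)[OF V that] unitary_repD(1)[OF V' that] by (simp add: outer_def)
  ultimately show ?thesis using p q unfolding twirl_def mat_sum_def by (auto intro!: sum.cong)
qed

lemma schur_orthogonality:
  assumes grp: "group G" and V: "unitary_rep G d V" and irr: "irreducible_rep G d V"
    and v: "v \<in> carrier_vec d" and w: "w \<in> carrier_vec d" and p: "p < d" and q: "q < d"
  shows "(\<Sum>g\<in>carrier G. (V g *\<^sub>v v) $ p * cnj ((V g *\<^sub>v w) $ q))
     = (if p = q then of_nat (card (carrier G)) * inner w v / of_nat d else 0)"
  using twirl_outer_index[OF V V v w p q] twirl_irreducible[OF grp V irr outer_carrier[OF v w]] p q
    trace_outer[OF v w] by auto

lemma schur_orthogonality_inequivalent: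
  assumes grp: "group G"
    and V: "unitary_rep G d V" and irr: "irreducible_rep G d V"
    and V': "unitary_rep G d' V'" and irr': "irreducible_rep G d' V'"
    and ne: "\<not> equiv_rep G d' V' d V"
    and v: "v \<in> carrier_vec d" and w: "w \<in> carrier_vec d'" and p: "p < d" and q: "q < d'"
  shows "(\<Sum>g\<in>carrier G. (V g *\<^sub>v v) $ p * cnj ((V' g *\<^sub>v w) $ q)) = 0"
  using twirl_outer_index[OF V V' v w p q] twirl_inequivalent[OF grp V irr V' irr' ne outer_carrier[OF v w]] p q
  by simp

lemma sum_lessThan_add: "(\<Sum>r<(a::nat) + b. f r) = (\<Sum>r<a. f r) + (\<Sum>u<b. f (a + u))"
  by (induction b) (auto simp: add.assoc)

lemma sum_lessThan_mult: "(\<Sum>t<(a::nat) * b. f t) = (\<Sum>p<a. \<Sum>q<b. f (p * b + q))"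
proof (induction a)
  case (Suc a)
  have "(\<Sum>t<Suc a * b. f t) = (\<Sum>t<a * b + b. f t)" by (simp add: add.commute)
  also have "\<dots> = (\<Sum>t<a * b. f t) + (\<Sum>q<b. f (a * b + q))" by (rule sum_lessThan_add)
  finally show ?case using Suc by simp
qed simp

lemma blk_off_Suc: "blk_off d (Suc i) = blk_off d i + d i * d i"
  unfolding blk_off_def by simp

lemma blk_off_mono: "i \<le> j \<Longrightarrow> blk_off d i \<le> blk_off d j"
  unfolding blk_off_def by (rule sum_mono2) auto

lemma blk_off_add_less:
  assumes "j < k" "u < d j * d j"
  shows "blk_off d j + u < blk_off d k"
proof -
  have "blk_off d j + u < blk_off d (Suc j)" using assms by (simp add: blk_off_Suc)
  also have "\<dots> \<le> blk_off d k" using assms by (intro blk_off_mono) auto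
  finally show ?thesis .
qed

lemma blk_of_blk_off_add:
  assumes "u < d j * d j"
  shows "blk_of d (blk_off d j + u) = j"
  unfolding blk_of_def
proof (rule Least_equality)
  show "blk_off d j + u < blk_off d (Suc j)" using assms by (simp add: blk_off_Suc)
next
  fix i assume "blk_off d j + u < blk_off d (Suc i)"
  then show "j \<le> i" using blk_off_mono[of "Suc i" j d] by (cases "j \<le> i") auto
qed

lemma blk_decomp:
  assumes "r < blk_off d k"
  obtains j u where "j < k" "u < d j * d j" "r = blk_off d j + u"
  using assms
proof (induction k)
  case 0 thus ?case by (simp add: blk_off_def)
next
  case (Suc k)
  show ?case
  proof (cases "r < blk_off d k")
    case True thus ?thesis using Suc.IH Suc.prems(1) by (meson less_SucI)
  next
    case False
    hence "r - blk_off d k < d k * d k" "r = blk_off d k + (r - blk_off d k)"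
      using Suc.prems by (auto simp: blk_off_Suc)
    thus ?thesis using Suc.prems(1) by blast
  qed
qed

lemma sum_blk_off: "(\<Sum>r<blk_off d k. f r) = (\<Sum>j<k. \<Sum>u<d j * d j. f (blk_off d j + u))"
  by (induction k) (auto simp: blk_off_Suc sum_lessThan_add blk_off_def)

lemma blk_vec_dim [simp]: "dim_vec (blk_vec k d v) = blk_off d k"
  unfolding blk_vec_def by simp

lemma blk_vec_carrier [simp]: "blk_vec k d v \<in> carrier_vec (blk_off d k)"
  unfolding blk_vec_def by simp

lemma blk_vec_index:
  assumes "j < k" "u < d j * d j"
  shows "blk_vec k d v $ (blk_off d j + u) = v j $ u"
  unfolding blk_vec_def using blk_off_add_less[where d = d, OF assms] blk_of_blk_off_add[where d = d, OF assms(2)]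
  by simp

lemma blk_vec_cong: "(\<And>i. i < k \<Longrightarrow> v i = v' i) \<Longrightarrow> blk_vec k d v = blk_vec k d v'"
  unfolding blk_vec_def
  by (rule eq_vecI) (auto elim!: blk_decomp simp: blk_of_blk_off_add)

lemma blk_diag_carrier [simp]: "blk_diag k d B \<in> carrier_mat (blk_off d k) (blk_off d k)"
  unfolding blk_diag_def by simp

lemma blk_diag_index:
  assumes "j < k" "u < d j * d j" "j' < k" "u' < d j' * d j'"
  shows "blk_diag k d B $$ (blk_off d j + u, blk_off d j' + u') = (if j = j' then B j $$ (u, u') else 0)"
  unfolding blk_diag_def
  using blk_off_add_less[where d = d, OF assms(1,2)] blk_off_add_less[where d = d, OF assms(3,4)]
    blk_of_blk_off_add[where d = d, OF assms(2)] blk_of_blk_off_add[where d = d, OF assms(4)]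
  by (cases "j = j'") simp_all

lemma blk_diag_mult_blk_vec:
  assumes B: "\<And>i. i < k \<Longrightarrow> B i \<in> carrier_mat (d i * d i) (d i * d i)"
    and v: "\<And>i. i < k \<Longrightarrow> v i \<in> carrier_vec (d i * d i)"
  shows "blk_diag k d B *\<^sub>v blk_vec k d v = blk_vec k d (\<lambda>i. B i *\<^sub>v v i)"
proof (rule eq_vecI)
  fix r assume "r < dim_vec (blk_vec k d (\<lambda>i. B i *\<^sub>v v i))"
  hence r: "r < blk_off d k" by simp
  then obtain j u where ju: "j < k" "u < d j * d j" "r = blk_off d j + u" by (rule blk_decomp)
  have "(blk_diag k d B *\<^sub>v blk_vec k d v) $ r = (\<Sum>s<blk_off d k. blk_diag k d B $$ (r, s) * blk_vec k d v $ s)"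
    using r by (simp add: blk_diag_def scalar_prod_def atLeast0LessThan)
  also have "\<dots> = (\<Sum>j'<k. \<Sum>u'<d j' * d j'. (if j = j' then B j $$ (u, u') else 0) * v j' $ u')"
    unfolding sum_blk_off using ju by (auto intro!: sum.cong simp: blk_diag_index blk_vec_index)
  also have "\<dots> = (\<Sum>j'<k. if j = j' then (\<Sum>u'<d j' * d j'. B j' $$ (u, u') * v j' $ u') else 0)"
    by (rule sum.cong) auto
  also have "\<dots> = (\<Sum>u'<d j * d j. B j $$ (u, u') * v j $ u')"
    using ju(1) by (simp add: sum.delta')
  also have "\<dots> = blk_vec k d (\<lambda>i. B i *\<^sub>v v i) $ r"
    using B[OF ju(1)] v[OF ju(1)] ju by (simp add: blk_vec_index scalar_prod_def atLeast0LessThan)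
  finally show "(blk_diag k d B *\<^sub>v blk_vec k d v) $ r = blk_vec k d (\<lambda>i. B i *\<^sub>v v i) $ r" .
qed (simp add: blk_diag_def)

lemma inner_blk_vec:
  assumes v: "\<And>i. i < k \<Longrightarrow> v i \<in> carrier_vec (d i * d i)"
  shows "inner (blk_vec k d v) (blk_vec k d w) = (\<Sum>i<k. inner (v i) (w i))"
proof -
  have "inner (v i) (w i) = (\<Sum>u<d i * d i. cnj (v i $ u) * w i $ u)" if "i < k" for i
    using v[OF that] unfolding inner_def by simp
  thus ?thesis unfolding inner_def blk_vec_dim sum_blk_off by (auto intro!: sum.cong simp: blk_vec_index)
qed

lemma kron_carrier [simp]:
  "A \<in> carrier_mat a b \<Longrightarrow> B \<in> carrier_mat c e \<Longrightarrow> kron A B \<in> carrier_mat (a * c) (b * e)"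
  unfolding kron_def by auto

lemma ment_vec_dim [simp]: "dim_vec (ment_vec D ps ph) = D * D"
  unfolding ment_vec_def by simp

lemma ment_vec_carrier [simp]: "ment_vec D ps ph \<in> carrier_vec (D * D)"
  unfolding ment_vec_def by simp

lemma ment_vec_conv:
  assumes "\<And>j. j < D \<Longrightarrow> ps j \<in> carrier_vec D" "\<And>j. j < D \<Longrightarrow> ph j \<in> carrier_vec D"
  shows "ment_vec D ps ph = vec (D * D) (\<lambda>t. \<Sum>j<D. ps j $ (t div D) * ph j $ (t mod D))"
proof -
  have "kron_vec (ps j) (ph j) $ t = ps j $ (t div D) * ph j $ (t mod D)" if "j < D" "t < D * D" for j t
    using assms(1)[OF that(1)] assms(2)[OF that(1)] that unfolding kron_vec_def by simp
  thus ?thesis unfolding ment_vec_def by (intro eq_vecI) auto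
qed

lemma ment_vec_index:
  assumes "\<And>j. j < D \<Longrightarrow> ps j \<in> carrier_vec D" "\<And>j. j < D \<Longrightarrow> ph j \<in> carrier_vec D" "t < D * D"
  shows "ment_vec D ps ph $ t = (\<Sum>j<D. ps j $ (t div D) * ph j $ (t mod D))"
  using ment_vec_conv[OF assms(1,2)] assms(3) by simp

lemma kron_one_mult_ment_vec:
  assumes A: "A \<in> carrier_mat D D"
    and ps: "\<And>j. j < D \<Longrightarrow> ps j \<in> carrier_vec D" and ph: "\<And>j. j < D \<Longrightarrow> ph j \<in> carrier_vec D"
  shows "kron A (1\<^sub>m D) *\<^sub>v ment_vec D ps ph = ment_vec D (\<lambda>j. A *\<^sub>v ps j) ph"
proof -
  have Aps: "\<And>j. j < D \<Longrightarrow> A *\<^sub>v ps j \<in> carrier_vec D" using A ps by auto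
  define f where "f t = (\<Sum>j<D. ps j $ (t div D) * ph j $ (t mod D))" for t
  have "(kron A (1\<^sub>m D) *\<^sub>v vec (D * D) f) $ t = (\<Sum>j<D. (A *\<^sub>v ps j) $ (t div D) * ph j $ (t mod D))"
    if t: "t < D * D" for t
  proof -
    have D: "D > 0" using t by (cases D) auto
    have tdm: "t div D < D" "t mod D < D" using t D by (auto simp: less_mult_imp_div_less)
    have "(kron A (1\<^sub>m D) *\<^sub>v vec (D * D) f) $ t
      = (\<Sum>s<D * D. A $$ (t div D, s div D) * (1\<^sub>m D) $$ (t mod D, s mod D) * f s)"
      using A t D by (auto simp: kron_def scalar_prod_def atLeast0LessThan less_mult_imp_div_less intro!: sum.cong)
    also have "\<dots> = (\<Sum>p<D. \<Sum>q<D. A $$ (t div D, p) * (1\<^sub>m D) $$ (t mod D, q) * f (p * D + q))"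
      unfolding sum_lessThan_mult by (auto intro!: sum.cong)
    also have "\<dots> = (\<Sum>p<D. A $$ (t div D, p) * f (p * D + t mod D))"
    proof (rule sum.cong[OF refl])
      fix p
      have "(\<Sum>q<D. A $$ (t div D, p) * (1\<^sub>m D) $$ (t mod D, q) * f (p * D + q))
          = (\<Sum>q<D. if q = t mod D then A $$ (t div D, p) * f (p * D + q) else 0)"
        using tdm by (intro sum.cong) auto
      thus "(\<Sum>q<D. A $$ (t div D, p) * (1\<^sub>m D) $$ (t mod D, q) * f (p * D + q))
          = A $$ (t div D, p) * f (p * D + t mod D)"
        using tdm by simp
    qed
    also have "\<dots> = (\<Sum>p<D. A $$ (t div D, p) * (\<Sum>j<D. ps j $ p * ph j $ (t mod D)))"
      using tdm unfolding f_def by simp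
    also have "\<dots> = (\<Sum>j<D. (\<Sum>p<D. A $$ (t div D, p) * ps j $ p) * ph j $ (t mod D))"
      unfolding sum_distrib_left sum_distrib_right by (subst sum.swap) (simp add: mult.assoc)
    also have "\<dots> = (\<Sum>j<D. (A *\<^sub>v ps j) $ (t div D) * ph j $ (t mod D))"
    proof -
      have "(A *\<^sub>v ps j) $ (t div D) = (\<Sum>p<D. A $$ (t div D, p) * ps j $ p)" if "j < D" for j
        using A ps[OF that] tdm by (auto simp: scalar_prod_def atLeast0LessThan)
      thus ?thesis by (auto intro!: sum.cong)
    qed
    finally show ?thesis .
  qed
  moreover have "ment_vec D ps ph = vec (D * D) f"
    unfolding f_def by (rule ment_vec_conv[OF ps ph])
  ultimately have "(kron A (1\<^sub>m D) *\<^sub>v ment_vec D ps ph) $ t = ment_vec D (\<lambda>j. A *\<^sub>v ps j) ph $ t"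
    if "t < D * D" for t
    using ment_vec_index[OF Aps ph that] that by simp
  moreover have "kron A (1\<^sub>m D) \<in> carrier_mat (D * D) (D * D)" using A by simp
  ultimately show ?thesis by (intro eq_vecI) auto
qed

lemma inner_ment_vec_self:
  assumes qs: "orthonormal D qs D" and ph: "orthonormal D ph D"
  shows "inner (ment_vec D qs ph) (ment_vec D qs ph) = of_nat D"
proof -
  have qsc: "\<And>j. j < D \<Longrightarrow> qs j \<in> carrier_vec D" and phc: "\<And>j. j < D \<Longrightarrow> ph j \<in> carrier_vec D"
    and orth: "\<And>j j'. j < D \<Longrightarrow> j' < D \<Longrightarrow> inner (qs j) (qs j') * inner (ph j) (ph j') = (if j = j' then 1 else 0)"
    using qs ph unfolding orthonormal_def by auto
  have "inner (ment_vec D qs ph) (ment_vec D qs ph)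
     = (\<Sum>p<D. \<Sum>q<D. (\<Sum>j<D. cnj (qs j $ p) * cnj (ph j $ q)) * (\<Sum>j'<D. qs j' $ p * ph j' $ q))"
  proof -
    have "ment_vec D qs ph = vec (D * D) (\<lambda>t. \<Sum>j<D. qs j $ (t div D) * ph j $ (t mod D))"
      by (rule ment_vec_conv[OF qsc phc])
    thus ?thesis unfolding inner_def by (simp add: sum_lessThan_mult)
  qed
  also have "\<dots> = (\<Sum>p<D. \<Sum>q<D. \<Sum>j<D. \<Sum>j'<D. cnj (qs j $ p) * qs j' $ p * (cnj (ph j $ q) * ph j' $ q))"
    by (simp only: sum_product) (simp add: mult_ac)
  also have "\<dots> = (\<Sum>p<D. \<Sum>j<D. \<Sum>q<D. \<Sum>j'<D. cnj (qs j $ p) * qs j' $ p * (cnj (ph j $ q) * ph j' $ q))"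
    by (rule sum.cong[OF refl], rule sum.swap)
  also have "\<dots> = (\<Sum>p<D. \<Sum>j<D. \<Sum>j'<D. \<Sum>q<D. cnj (qs j $ p) * qs j' $ p * (cnj (ph j $ q) * ph j' $ q))"
    by (rule sum.cong[OF refl], rule sum.cong[OF refl], rule sum.swap)
  also have "\<dots> = (\<Sum>j<D. \<Sum>p<D. \<Sum>j'<D. \<Sum>q<D. cnj (qs j $ p) * qs j' $ p * (cnj (ph j $ q) * ph j' $ q))"
    by (rule sum.swap)
  also have "\<dots> = (\<Sum>j<D. \<Sum>j'<D. \<Sum>p<D. \<Sum>q<D. cnj (qs j $ p) * qs j' $ p * (cnj (ph j $ q) * ph j' $ q))"
    by (rule sum.cong[OF refl], rule sum.swap)
  also have "\<dots> = (\<Sum>j<D. \<Sum>j'<D. (\<Sum>p<D. cnj (qs j $ p) * qs j' $ p) * (\<Sum>q<D. cnj (ph j $ q) * ph j' $ q))"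
    by (simp only: sum_product)
  also have "\<dots> = (\<Sum>j<D. \<Sum>j'<D. inner (qs j) (qs j') * inner (ph j) (ph j'))"
  proof -
    have "\<And>j. j < D \<Longrightarrow> dim_vec (qs j) = D" "\<And>j. j < D \<Longrightarrow> dim_vec (ph j) = D"
      using qsc phc by auto
    thus ?thesis unfolding inner_def by (auto intro!: sum.cong)
  qed
  also have "\<dots> = of_nat D" by (simp add: orth)
  finally show ?thesis .
qed

lemma sum_orbit_ment_vec_expand:
  assumes t: "t < D * D" and t': "t' < D' * D'"
    and V: "\<And>g. g \<in> carrier G \<Longrightarrow> V g \<in> carrier_mat D D"
    and V': "\<And>g. g \<in> carrier G \<Longrightarrow> V' g \<in> carrier_mat D' D'"
    and ps: "\<And>l. l < D \<Longrightarrow> ps l \<in> carrier_vec D" and ph: "\<And>l. l < D \<Longrightarrow> ph l \<in> carrier_vec D"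
    and ps': "\<And>l. l < D' \<Longrightarrow> ps' l \<in> carrier_vec D'" and ph': "\<And>l. l < D' \<Longrightarrow> ph' l \<in> carrier_vec D'"
  shows "(\<Sum>g\<in>carrier G. ment_vec D (\<lambda>l. V g *\<^sub>v ps l) ph $ t
                         * cnj (ment_vec D' (\<lambda>l. V' g *\<^sub>v ps' l) ph' $ t'))
       = (\<Sum>l<D. \<Sum>l'<D'. ph l $ (t mod D) * cnj (ph' l' $ (t' mod D'))
           * (\<Sum>g\<in>carrier G. (V g *\<^sub>v ps l) $ (t div D) * cnj ((V' g *\<^sub>v ps' l') $ (t' div D'))))"
proof -
  have "ment_vec D (\<lambda>l. V g *\<^sub>v ps l) ph $ t = (\<Sum>l<D. (V g *\<^sub>v ps l) $ (t div D) * ph l $ (t mod D))"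
    if "g \<in> carrier G" for g
    using ment_vec_index[OF _ ph t] V[OF that] ps by simp
  moreover have "ment_vec D' (\<lambda>l. V' g *\<^sub>v ps' l) ph' $ t'
      = (\<Sum>l<D'. (V' g *\<^sub>v ps' l) $ (t' div D') * ph' l $ (t' mod D'))"
    if "g \<in> carrier G" for g
    using ment_vec_index[OF _ ph' t'] V'[OF that] ps' by simp
  ultimately have "(\<Sum>g\<in>carrier G. ment_vec D (\<lambda>l. V g *\<^sub>v ps l) ph $ t
                         * cnj (ment_vec D' (\<lambda>l. V' g *\<^sub>v ps' l) ph' $ t'))
      = (\<Sum>g\<in>carrier G. (\<Sum>l<D. (V g *\<^sub>v ps l) $ (t div D) * ph l $ (t mod D))
                         * cnj (\<Sum>l'<D'. (V' g *\<^sub>v ps' l') $ (t' div D') * ph' l' $ (t' mod D')))"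
    by simp
  also have "\<dots> = (\<Sum>l<D. \<Sum>l'<D'. \<Sum>g\<in>carrier G. (V g *\<^sub>v ps l) $ (t div D) * ph l $ (t mod D)
                         * cnj ((V' g *\<^sub>v ps' l') $ (t' div D') * ph' l' $ (t' mod D')))"
    by (rule sum_mult_cnj_sum)
  finally show ?thesis by (simp add: sum_distrib_left mult_ac)
qed

lemma sum_orbit_ment_vec:
  assumes grp: "group G" and V: "unitary_rep G D V" and irr: "irreducible_rep G D V"
    and ps: "orthonormal D ps D" and ph: "orthonormal_basis D ph"
    and t: "t < D * D" and t': "t' < D * D"
  shows "(\<Sum>g\<in>carrier G. ment_vec D (\<lambda>l. V g *\<^sub>v ps l) ph $ t * cnj (ment_vec D (\<lambda>l. V g *\<^sub>v ps l) ph $ t'))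
       = (if t = t' then of_nat (card (carrier G)) / of_nat D else 0)"
proof -
  have psc: "\<And>l. l < D \<Longrightarrow> ps l \<in> carrier_vec D" and phc: "\<And>l. l < D \<Longrightarrow> ph l \<in> carrier_vec D"
    using ps ph unfolding orthonormal_basis_def orthonormal_def by auto
  have D: "D > 0" using t by (cases D) auto
  let ?p = "t div D" and ?q = "t mod D" and ?p' = "t' div D" and ?q' = "t' mod D"
  let ?c = "of_nat (card (carrier G)) / of_nat D :: complex"
  have pq: "?p < D" "?q < D" "?p' < D" "?q' < D" using t t' D by (auto simp: less_mult_imp_div_less)
  have orbit: "(\<Sum>g\<in>carrier G. (V g *\<^sub>v ps l) $ ?p * cnj ((V g *\<^sub>v ps l') $ ?p'))
      = (if ?p = ?p' \<and> l = l' then ?c else 0)" if "l < D" "l' < D" for l l'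
    using schur_orthogonality[OF grp V irr psc psc pq(1,3), OF that(1,2)] ps that
    unfolding orthonormal_def by auto
  have "(\<Sum>g\<in>carrier G. ment_vec D (\<lambda>l. V g *\<^sub>v ps l) ph $ t * cnj (ment_vec D (\<lambda>l. V g *\<^sub>v ps l) ph $ t'))
      = (\<Sum>l<D. \<Sum>l'<D. ph l $ ?q * cnj (ph l' $ ?q')
           * (\<Sum>g\<in>carrier G. (V g *\<^sub>v ps l) $ ?p * cnj ((V g *\<^sub>v ps l') $ ?p')))"
    using unitary_repD(1)[OF V] unitary_repD(1)[OF V] psc phc psc phc
    by (rule sum_orbit_ment_vec_expand[OF t t'])
  also have "\<dots> = (\<Sum>l<D. \<Sum>l'<D. ph l $ ?q * cnj (ph l' $ ?q') * (if ?p = ?p' \<and> l = l' then ?c else 0))"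
    by (simp add: orbit)
  also have "\<dots> = (if ?p = ?p' then (\<Sum>l<D. ph l $ ?q * cnj (ph l $ ?q')) * ?c else 0)"
    by (simp add: if_distrib[of "\<lambda>x. _ * x"] sum.delta sum_distrib_right sum_divide_distrib cong: if_cong)
  also have "\<dots> = (if ?p = ?p' \<and> ?q = ?q' then ?c else 0)"
    unfolding orthonormal_basis_complete[OF ph pq(2,4)] by simp
  also have "(?p = ?p' \<and> ?q = ?q') = (t = t')" by (metis div_mult_mod_eq)
  finally show ?thesis .
qed

lemma sum_orbit_ment_vec_inequivalent:
  assumes grp: "group G"
    and V: "unitary_rep G D V" and irr: "irreducible_rep G D V"
    and V': "unitary_rep G D' V'" and irr': "irreducible_rep G D' V'"
    and ne: "\<not> equiv_rep G D' V' D V"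
    and ps: "orthonormal D ps D" and ph: "orthonormal D ph D"
    and ps': "orthonormal D' ps' D'" and ph': "orthonormal D' ph' D'"
    and t: "t < D * D" and t': "t' < D' * D'"
  shows "(\<Sum>g\<in>carrier G. ment_vec D (\<lambda>l. V g *\<^sub>v ps l) ph $ t
                         * cnj (ment_vec D' (\<lambda>l. V' g *\<^sub>v ps' l) ph' $ t')) = 0"
proof -
  have psc: "\<And>l. l < D \<Longrightarrow> ps l \<in> carrier_vec D" and phc: "\<And>l. l < D \<Longrightarrow> ph l \<in> carrier_vec D"
    and ps'c: "\<And>l. l < D' \<Longrightarrow> ps' l \<in> carrier_vec D'" and ph'c: "\<And>l. l < D' \<Longrightarrow> ph' l \<in> carrier_vec D'"
    using ps ph ps' ph' unfolding orthonormal_def by auto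
  have "D > 0" "D' > 0" using t t' by (cases D; cases D'; auto)+
  hence p: "t div D < D" "t' div D' < D'" using t t' by (auto simp: less_mult_imp_div_less)
  have zero: "(\<Sum>g\<in>carrier G. (V g *\<^sub>v ps l) $ (t div D) * cnj ((V' g *\<^sub>v ps' l') $ (t' div D'))) = 0"
    if "l < D" "l' < D'" for l l'
    by (rule schur_orthogonality_inequivalent[OF grp V irr V' irr' ne psc[OF that(1)] ps'c[OF that(2)] p])
  have "(\<Sum>g\<in>carrier G. ment_vec D (\<lambda>l. V g *\<^sub>v ps l) ph $ t
                         * cnj (ment_vec D' (\<lambda>l. V' g *\<^sub>v ps' l) ph' $ t'))
       = (\<Sum>l<D. \<Sum>l'<D'. ph l $ (t mod D) * cnj (ph' l' $ (t' mod D'))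
           * (\<Sum>g\<in>carrier G. (V g *\<^sub>v ps l) $ (t div D) * cnj ((V' g *\<^sub>v ps' l') $ (t' div D'))))"
    using unitary_repD(1)[OF V] unitary_repD(1)[OF V'] psc phc ps'c ph'c
    by (rule sum_orbit_ment_vec_expand[OF t t'])
  thus ?thesis by (simp add: zero)
qed

locale unitary_irrep_blocks =
  fixes G :: "('g, 'b) monoid_scheme" and k :: nat and d :: "nat \<Rightarrow> nat"
    and Ui :: "nat \<Rightarrow> 'g \<Rightarrow> complex mat" and ps ph :: "nat \<Rightarrow> nat \<Rightarrow> complex vec"
  assumes group_G: "group G"
    and unitary_irreps: "\<And>i. i < k \<Longrightarrow> unitary_rep G (d i) (Ui i) \<and> irreducible_rep G (d i) (Ui i)"
    and pairwise_inequivalent: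
      "\<And>i j. i < k \<Longrightarrow> j < k \<Longrightarrow> i \<noteq> j \<Longrightarrow> \<not> equiv_rep G (d i) (Ui i) (d j) (Ui j)"
    and orthonormal_bases: "\<And>i. i < k \<Longrightarrow> orthonormal_basis (d i) (ps i) \<and> orthonormal_basis (d i) (ph i)"
begin

definition block_rep :: "'g \<Rightarrow> complex mat" where
  "block_rep g = blk_diag k d (\<lambda>i. kron (Ui i g) (1\<^sub>m (d i)))"

definition ment_sum :: "(nat \<Rightarrow> complex) \<Rightarrow> complex vec" where
  "ment_sum c = blk_vec k d (\<lambda>i. c i \<cdot>\<^sub>v ment_vec (d i) (ps i) (ph i))"

lemma block_rep_carrier [simp]: "block_rep g \<in> carrier_mat (blk_off d k) (blk_off d k)"
  unfolding block_rep_def by simp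

lemma block_rep_dim [simp]: "dim_row (block_rep g) = blk_off d k"
  unfolding block_rep_def blk_diag_def by simp

lemma ment_sum_carrier [simp]: "ment_sum c \<in> carrier_vec (blk_off d k)"
  unfolding ment_sum_def by simp

lemma block_rep_mult_ment_sum_carrier [simp]: "block_rep g *\<^sub>v ment_sum c \<in> carrier_vec (blk_off d k)"
  by (rule mult_mat_vec_carrier[OF block_rep_carrier ment_sum_carrier])

lemma block_unitary: "i < k \<Longrightarrow> unitary_rep G (d i) (Ui i)"
  and block_irreducible: "i < k \<Longrightarrow> irreducible_rep G (d i) (Ui i)"
  using unitary_irreps by auto

lemma block_dim_pos: "i < k \<Longrightarrow> 0 < d i"
  using block_irreducible unfolding irreducible_rep_def by blast

lemma ps_orthonormal: "i < k \<Longrightarrow> orthonormal (d i) (ps i) (d i)"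
  and ph_basis: "i < k \<Longrightarrow> orthonormal_basis (d i) (ph i)"
  and ph_orthonormal: "i < k \<Longrightarrow> orthonormal (d i) (ph i) (d i)"
  using orthonormal_bases unfolding orthonormal_basis_def by auto

lemma block_carrier: "i < k \<Longrightarrow> g \<in> carrier G \<Longrightarrow> Ui i g \<in> carrier_mat (d i) (d i)"
  by (rule unitary_repD(1)[OF block_unitary])

lemma basis_carrier:
  "i < k \<Longrightarrow> l < d i \<Longrightarrow> ps i l \<in> carrier_vec (d i)"
  "i < k \<Longrightarrow> l < d i \<Longrightarrow> ph i l \<in> carrier_vec (d i)"
  using ps_orthonormal ph_orthonormal unfolding orthonormal_def by auto

lemma rotated_basis_orthonormal:
  assumes "i < k" "g \<in> carrier G"
  shows "orthonormal (d i) (\<lambda>l. Ui i g *\<^sub>v ps i l) (d i)"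
  by (rule orthonormal_isometry_image[OF block_carrier[OF assms] unitary_repD(2)[OF block_unitary[OF assms(1)] assms(2)]
        ps_orthonormal[OF assms(1)]])

lemma block_rep_mult_ment_sum:
  assumes g: "g \<in> carrier G"
  shows "block_rep g *\<^sub>v ment_sum c
       = blk_vec k d (\<lambda>i. c i \<cdot>\<^sub>v ment_vec (d i) (\<lambda>l. Ui i g *\<^sub>v ps i l) (ph i))"
proof -
  have K: "kron (Ui i g) (1\<^sub>m (d i)) \<in> carrier_mat (d i * d i) (d i * d i)" if "i < k" for i
    using block_carrier[OF that g] by simp
  have "kron (Ui i g) (1\<^sub>m (d i)) *\<^sub>v (c i \<cdot>\<^sub>v ment_vec (d i) (ps i) (ph i))
      = c i \<cdot>\<^sub>v ment_vec (d i) (\<lambda>l. Ui i g *\<^sub>v ps i l) (ph i)" if i: "i < k" for i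
    using K[OF i] kron_one_mult_ment_vec[OF block_carrier[OF i g] basis_carrier[OF i]]
    by (simp add: mult_mat_vec)
  thus ?thesis
    unfolding block_rep_def ment_sum_def
    by (subst blk_diag_mult_blk_vec[OF K]) (auto intro!: blk_vec_cong)
qed

lemma inner_block_rep_ment_sum:
  assumes g: "g \<in> carrier G"
  shows "inner (block_rep g *\<^sub>v ment_sum c) (block_rep g *\<^sub>v ment_sum b)
       = (\<Sum>i<k. cnj (c i) * b i * of_nat (d i))"
proof -
  have "inner (c i \<cdot>\<^sub>v ment_vec (d i) (\<lambda>l. Ui i g *\<^sub>v ps i l) (ph i))
              (b i \<cdot>\<^sub>v ment_vec (d i) (\<lambda>l. Ui i g *\<^sub>v ps i l) (ph i)) = cnj (c i) * b i * of_nat (d i)"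
    if i: "i < k" for i
    by (simp add: inner_smult[OF ment_vec_carrier ment_vec_carrier]
        inner_ment_vec_self[OF rotated_basis_orthonormal[OF i g] ph_orthonormal[OF i]])
  thus ?thesis
    unfolding block_rep_mult_ment_sum[OF g] by (subst inner_blk_vec) auto
qed

lemma orbit_ment_sum_frame:
  assumes c: "\<And>i. i < k \<Longrightarrow> c i * cnj (c i) = of_nat (d i)"
  shows "mat_sum (\<lambda>g. outer (block_rep g *\<^sub>v ment_sum c) (block_rep g *\<^sub>v ment_sum c)) (carrier G)
           (blk_off d k) (blk_off d k)
         = of_nat (card (carrier G)) \<cdot>\<^sub>m 1\<^sub>m (blk_off d k)"
proof (rule eq_matI)
  let ?L = "blk_off d k" and ?Y = "\<lambda>g. block_rep g *\<^sub>v ment_sum c"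
  let ?E = "\<lambda>i g. ment_vec (d i) (\<lambda>l. Ui i g *\<^sub>v ps i l) (ph i)"
  fix r s assume "r < dim_row (of_nat (card (carrier G)) \<cdot>\<^sub>m 1\<^sub>m ?L)"
    and "s < dim_col (of_nat (card (carrier G)) \<cdot>\<^sub>m 1\<^sub>m ?L)"
  hence r: "r < ?L" and s: "s < ?L" by auto
  obtain i t where i: "i < k" and t: "t < d i * d i" and r_eq: "r = blk_off d i + t"
    using r by (rule blk_decomp)
  obtain j t' where j: "j < k" and t': "t' < d j * d j" and s_eq: "s = blk_off d j + t'"
    using s by (rule blk_decomp)
  have "?Y g = blk_vec k d (\<lambda>i. c i \<cdot>\<^sub>v ?E i g)" if "g \<in> carrier G" for g
    using block_rep_mult_ment_sum[OF that] .
  hence "mat_sum (\<lambda>g. outer (?Y g) (?Y g)) (carrier G) ?L ?L $$ (r, s)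
      = c i * cnj (c j) * (\<Sum>g\<in>carrier G. ?E i g $ t * cnj (?E j g $ t'))"
    using r s i j t t' unfolding r_eq s_eq
    by (simp add: mat_sum_def outer_def blk_vec_index sum_distrib_left mult_ac)
  also have "\<dots> = (if r = s then of_nat (card (carrier G)) else 0)"
  proof (cases "i = j")
    case True
    have "d i > 0" by (rule block_dim_pos[OF i])
    moreover have "(r = s) = (t = t')" unfolding r_eq s_eq True by simp
    moreover have "(\<Sum>g\<in>carrier G. ?E i g $ t * cnj (?E i g $ t'))
        = (if t = t' then of_nat (card (carrier G)) / of_nat (d i) else 0)"
      using t' unfolding True[symmetric]
      by (rule sum_orbit_ment_vec[OF group_G block_unitary[OF i] block_irreducible[OF i]
            ps_orthonormal[OF i] ph_basis[OF i] t])
    ultimately show ?thesis using c[OF i] True by simp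
  next
    case False
    have "r \<noteq> s"
      using blk_of_blk_off_add[where d = d, OF t] blk_of_blk_off_add[where d = d, OF t'] r_eq s_eq False
      by metis
    moreover have "\<not> equiv_rep G (d j) (Ui j) (d i) (Ui i)" using pairwise_inequivalent[OF j i] False by auto
    hence "(\<Sum>g\<in>carrier G. ?E i g $ t * cnj (?E j g $ t')) = 0"
      by (rule sum_orbit_ment_vec_inequivalent[OF group_G block_unitary[OF i] block_irreducible[OF i]
            block_unitary[OF j] block_irreducible[OF j] _ ps_orthonormal[OF i] ph_orthonormal[OF i]
            ps_orthonormal[OF j] ph_orthonormal[OF j] t t'])
    ultimately show ?thesis by simp
  qed
  finally show "mat_sum (\<lambda>g. outer (?Y g) (?Y g)) (carrier G) ?L ?L $$ (r, s)
      = (of_nat (card (carrier G)) \<cdot>\<^sub>m 1\<^sub>m ?L) $$ (r, s)" using r s by simp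
qed auto

lemma coisometry_orbit_ment_sum_frame:
  assumes A: "A \<in> carrier_mat N (blk_off d k)" and AA: "A * adj A = 1\<^sub>m N"
    and c: "\<And>i. i < k \<Longrightarrow> c i * cnj (c i) = of_nat (d i)"
  shows "mat_sum (\<lambda>g. outer (A *\<^sub>v (block_rep g *\<^sub>v ment_sum c)) (A *\<^sub>v (block_rep g *\<^sub>v ment_sum c)))
           (carrier G) N N
         = of_nat (card (carrier G)) \<cdot>\<^sub>m 1\<^sub>m N"
proof -
  have "mat_sum (\<lambda>g. outer (A *\<^sub>v (block_rep g *\<^sub>v ment_sum c)) (A *\<^sub>v (block_rep g *\<^sub>v ment_sum c)))
          (carrier G) N N
      = A * (of_nat (card (carrier G)) \<cdot>\<^sub>m 1\<^sub>m (blk_off d k)) * adj A"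
    by (subst mat_sum_outer_mult[OF _ A]) (simp_all add: orbit_ment_sum_frame[OF c])
  also have "\<dots> = of_nat (card (carrier G)) \<cdot>\<^sub>m (A * adj A)"
    using A by (simp add: mult_smult_distrib[OF A one_carrier_mat] right_mult_one_mat[OF A]
        mult_smult_assoc_mat[OF A adj_carrier[OF A]])
  finally show ?thesis using AA by simp
qed

end

section \<open>Closing a polygon with prescribed side lengths\<close>

lemma exists_signs_sum_bounded:
  fixes r :: "nat \<Rightarrow> real"
  assumes "finite J" "\<And>j. j \<in> J \<Longrightarrow> 0 \<le> r j \<and> r j \<le> R" "0 \<le> R"
  shows "\<exists>e. \<bar>\<Sum>j\<in>J. (if e j then r j else - r j)\<bar> \<le> R"
  using assms
proof (induction J rule: finite_induct)
  case (insert x F)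
  then obtain e where e: "\<bar>\<Sum>j\<in>F. (if e j then r j else - r j)\<bar> \<le> R" by auto
  define s where "s = (\<Sum>j\<in>F. (if e j then r j else - r j))"
  define e' where "e' = e(x := (s < 0))"
  have "(\<Sum>j\<in>F. (if e' j then r j else - r j)) = s"
    unfolding s_def e'_def using insert.hyps by (intro sum.cong) auto
  hence "(\<Sum>j\<in>insert x F. (if e' j then r j else - r j)) = (if s < 0 then r x else - r x) + s"
    using insert.hyps by (simp add: e'_def)
  moreover have "0 \<le> r x" "r x \<le> R" using insert.prems by auto
  hence "\<bar>(if s < 0 then r x else - r x) + s\<bar> \<le> R"
    using e unfolding s_def[symmetric] by auto
  ultimately show ?case by metis
qed simp

text \<open>Flipping the sides with e j = False continuously from direction 1 to direction -1 moves the
  length of the resulting chain from the full sum to a value at most R, so by the intermediate value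
  theorem some intermediate angle gives length exactly R.\<close>

lemma exists_unit_phases_sum_norm_eq:
  fixes r :: "nat \<Rightarrow> real"
  assumes fin: "finite J" and rJ: "\<And>j. j \<in> J \<Longrightarrow> 0 \<le> r j \<and> r j \<le> R" and R: "0 \<le> R"
    and S: "R \<le> (\<Sum>j\<in>J. r j)"
  shows "\<exists>z. (\<forall>j. cmod (z j) = 1) \<and> cmod (\<Sum>j\<in>J. complex_of_real (r j) * z j) = R"
proof -
  obtain e where e: "\<bar>\<Sum>j\<in>J. (if e j then r j else - r j)\<bar> \<le> R"
    using exists_signs_sum_bounded[of J r R] fin rJ R by blast
  define z where "z t j = (if e j then 1 else cis (pi * t))" for t j
  define h where "h t = cmod (\<Sum>j\<in>J. complex_of_real (r j) * z t j)" for t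
  have "(\<Sum>j\<in>J. complex_of_real (r j) * z 0 j) = complex_of_real (\<Sum>j\<in>J. r j)"
    unfolding z_def by (auto intro!: sum.cong)
  hence h0: "h 0 = (\<Sum>j\<in>J. r j)" unfolding h_def using rJ by (simp add: sum_nonneg flip: of_real_sum)
  have "(\<Sum>j\<in>J. complex_of_real (r j) * z 1 j) = complex_of_real (\<Sum>j\<in>J. (if e j then r j else - r j))"
    unfolding z_def by (auto intro!: sum.cong)
  hence h1: "h 1 = \<bar>\<Sum>j\<in>J. (if e j then r j else - r j)\<bar>" unfolding h_def by (simp only: norm_of_real)
  have "continuous_on {0..1} (\<lambda>t. z t j)" for j
    unfolding z_def by (cases "e j") (auto intro!: continuous_intros simp: cis_conv_exp)
  hence "continuous_on {0..1} h" unfolding h_def by (intro continuous_intros)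
  then obtain t where "h t = R"
    using IVT2'[of h 1 R 0] h0 h1 e S by auto
  moreover have "\<forall>j. cmod (z t j) = 1" unfolding z_def by auto
  ultimately show ?thesis unfolding h_def by blast
qed

lemma exists_unit_phases_real_sum_zero:
  fixes r :: "nat \<Rightarrow> real"
  assumes fin: "finite I" and i0: "i0 \<in> I" and rI: "\<And>i. i \<in> I \<Longrightarrow> 0 \<le> r i \<and> r i \<le> r i0"
    and S: "r i0 \<le> (\<Sum>j\<in>I - {i0}. r j)"
  shows "\<exists>z. (\<forall>j. cmod (z j) = 1) \<and> (\<Sum>j\<in>I. complex_of_real (r j) * z j) = 0"
proof (cases "r i0 = 0")
  case True
  hence "\<And>i. i \<in> I \<Longrightarrow> r i = 0" using rI by force
  thus ?thesis by (intro exI[of _ "\<lambda>_. 1"]) auto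
next
  case False
  let ?J = "I - {i0}"
  obtain z where z: "\<forall>j. cmod (z j) = 1" "cmod (\<Sum>j\<in>?J. complex_of_real (r j) * z j) = r i0"
    using exists_unit_phases_sum_norm_eq[of ?J r "r i0"] fin rI i0 S by auto
  define s where "s = (\<Sum>j\<in>?J. complex_of_real (r j) * z j)"
  define z' where "z' = z(i0 := - s / complex_of_real (r i0))"
  have "cmod (z' i0) = 1" using z(2) False rI[OF i0] unfolding z'_def s_def by (simp add: norm_divide)
  hence "\<forall>j. cmod (z' j) = 1" using z(1) unfolding z'_def by auto
  moreover have "(\<Sum>j\<in>?J. complex_of_real (r j) * z' j) = s"
    unfolding s_def z'_def by (intro sum.cong) auto
  hence "(\<Sum>j\<in>I. complex_of_real (r j) * z' j) = 0"
    using fin i0 False by (simp add: sum.remove z'_def)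
  ultimately show ?thesis by blast
qed

lemma exists_unit_phases_sum_zero:
  fixes b :: "nat \<Rightarrow> complex"
  assumes fin: "finite I" and i0: "i0 \<in> I" and max: "\<And>i. i \<in> I \<Longrightarrow> cmod (b i) \<le> cmod (b i0)"
    and S: "cmod (b i0) \<le> (\<Sum>j\<in>I - {i0}. cmod (b j))"
  shows "\<exists>z. (\<forall>j. cmod (z j) = 1) \<and> (\<Sum>j\<in>I. z j * b j) = 0"
proof -
  obtain w where w1: "\<forall>j. cmod (w j) = 1" and w0: "(\<Sum>j\<in>I. complex_of_real (cmod (b j)) * w j) = 0"
    using exists_unit_phases_real_sum_zero[of I i0 "\<lambda>j. cmod (b j)"] assms by auto
  define z where "z j = w j * (if b j = 0 then 1 else cnj (b j) / complex_of_real (cmod (b j)))" for j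
  have "z j * b j = complex_of_real (cmod (b j)) * w j" for j
    using cnj_mult_self[of "b j"] unfolding z_def by (auto simp: power2_eq_square field_simps)
  hence "(\<Sum>j\<in>I. z j * b j) = 0" using w0 by simp
  moreover have "cmod (z j) = 1" for j using w1 unfolding z_def by (simp add: norm_mult norm_divide)
  ultimately show ?thesis by blast
qed

lemma exists_balanced_coefficients:
  fixes a :: "nat \<Rightarrow> complex" and d :: "nat \<Rightarrow> nat"
  assumes d: "\<And>i. i < k \<Longrightarrow> 0 < d i" and i0: "i0 < k"
    and max: "\<And>i. i < k \<Longrightarrow> real (d i) * cmod (a i) \<le> real (d i0) * cmod (a i0)"
    and cond: "real (d i0) * cmod (a i0) \<le> (\<Sum>i\<in>{..<k} - {i0}. real (d i) * cmod (a i))"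
  shows "\<exists>c. (\<forall>i<k. c i * cnj (c i) = of_nat (d i))
           \<and> (\<Sum>i<k. cnj (c i) * (a i / complex_of_real (sqrt (real (d i)))) * of_nat (d i)) = 0"
proof -
  have "cmod (a i * of_nat (d i)) = real (d i) * cmod (a i)" for i
    by (simp add: norm_mult)
  hence "\<exists>z. (\<forall>i. cmod (z i) = 1) \<and> (\<Sum>i\<in>{..<k}. z i * (a i * of_nat (d i))) = 0"
    using i0 max cond by (intro exists_unit_phases_sum_zero[of "{..<k}" i0]) auto
  then obtain z where z1: "\<And>i. cmod (z i) = 1" and z0: "(\<Sum>i<k. z i * (a i * of_nat (d i))) = 0"
    by blast
  define sq where "sq i = complex_of_real (sqrt (real (d i)))" for i
  have sq: "cnj (sq i) = sq i" "sq i * sq i = of_nat (d i)" for i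
    unfolding sq_def by (simp_all flip: of_real_mult)
  have nz: "sq i \<noteq> 0" if "i < k" for i
    using d[OF that] unfolding sq_def by simp
  define c where "c i = sq i * cnj (z i)" for i
  have "c i * cnj (c i) = of_nat (d i)" for i
    using sq(2)[of i] z1[of i] cnj_mult_self[of "z i"] unfolding c_def by (simp add: sq(1) mult_ac)
  moreover have "(\<Sum>i<k. cnj (c i) * (a i / sq i) * of_nat (d i)) = 0"
    using z0 sq nz unfolding c_def by (simp add: field_simps)
  ultimately show ?thesis unfolding sq_def by blast
qed
section \<open>The excluding measurement\<close>

lemma exists_excluding_rank_one_povm:
  assumes fin: "finite I" and ne: "I \<noteq> {}"
    and w: "\<And>g. g \<in> I \<Longrightarrow> w g \<in> carrier_vec N" and u: "\<And>g. g \<in> I \<Longrightarrow> u g \<in> carrier_vec N"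
    and frame: "mat_sum (\<lambda>g. outer (w g) (w g)) I N N = of_nat (card I) \<cdot>\<^sub>m 1\<^sub>m N"
    and orth: "\<And>g. g \<in> I \<Longrightarrow> inner (w g) (u g) = 0"
  shows "\<exists>M. (\<forall>g\<in>I. psd N (M g))
           \<and> (\<forall>r<N. \<forall>s<N. (\<Sum>g\<in>I. M g $$ (r, s)) = (if r = s then 1 else 0))
           \<and> (\<forall>g\<in>I. inner (u g) (M g *\<^sub>v u g) = 0)"
proof (intro exI[of _ "\<lambda>g. complex_of_real (1 / real (card I)) \<cdot>\<^sub>m outer (w g) (w g)"] conjI ballI allI impI)
  fix g assume g: "g \<in> I"
  show "psd N (complex_of_real (1 / real (card I)) \<cdot>\<^sub>m outer (w g) (w g))"
    by (rule psd_smult_outer_self[OF w[OF g]]) simp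
  show "inner (u g) ((complex_of_real (1 / real (card I)) \<cdot>\<^sub>m outer (w g) (w g)) *\<^sub>v u g) = 0"
    using inner_smult_outer_self[OF w[OF g] u[OF g]] orth[OF g] by simp
next
  fix r s assume rs: "r < N" "s < N"
  have "dim_vec (w g) = N" if "g \<in> I" for g using w[OF that] by (rule carrier_vecD)
  hence "(\<Sum>g\<in>I. (complex_of_real (1 / real (card I)) \<cdot>\<^sub>m outer (w g) (w g)) $$ (r, s))
      = complex_of_real (1 / real (card I)) * mat_sum (\<lambda>g. outer (w g) (w g)) I N N $$ (r, s)"
    using rs by (simp add: mat_sum_def outer_def sum_distrib_left)
  thus "(\<Sum>g\<in>I. (complex_of_real (1 / real (card I)) \<cdot>\<^sub>m outer (w g) (w g)) $$ (r, s))
      = (if r = s then 1 else 0)"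
    using frame rs fin ne by simp
qed

lemma unitary_intertwiner_mult_adj:
  assumes W: "W \<in> carrier_mat L N" "W * adj W = 1\<^sub>m L" "adj W * W = 1\<^sub>m N"
    and K: "K \<in> carrier_mat N N" and B: "B \<in> carrier_mat L L" and WK: "W * K = B * W"
    and x: "x \<in> carrier_vec L"
  shows "K *\<^sub>v (adj W *\<^sub>v x) = adj W *\<^sub>v (B *\<^sub>v x)"
proof -
  have aW: "adj W \<in> carrier_mat N L" using W(1) by simp
  have v: "adj W *\<^sub>v x \<in> carrier_vec N" using aW x by simp
  have "K = adj W * W * K" using W(3) K by simp
  also have "\<dots> = adj W * B * W"
    using W(1) K B by (simp add: assoc_mult_mat_dims carrier_matD WK)
  finally have "K *\<^sub>v (adj W *\<^sub>v x) = (adj W * B) *\<^sub>v (W *\<^sub>v (adj W *\<^sub>v x))"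
    using assoc_mult_mat_vec[OF mult_carrier_mat[OF aW B] W(1) v] by simp
  also have "\<dots> = adj W *\<^sub>v (B *\<^sub>v ((W * adj W) *\<^sub>v x))"
    using assoc_mult_mat_vec[OF aW B] assoc_mult_mat_vec[OF W(1) aW x] W(1) v by simp
  finally show ?thesis using W(2) x by simp
qed

theorem theorem1:
  fixes G :: "('g, 'b) monoid_scheme"
    and n m :: nat
    and U :: "'g \<Rightarrow> complex mat"
    and k :: nat and d :: "nat \<Rightarrow> nat" and Ui :: "nat \<Rightarrow> 'g \<Rightarrow> complex mat"
    and W :: "complex mat"
    and ps ph :: "nat \<Rightarrow> nat \<Rightarrow> complex vec"
    and a :: "nat \<Rightarrow> complex" and i0 :: nat
  assumes grp: "group G" and fin: "finite (carrier G)"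
    and repU: "unitary_rep G n U"
    and irr: "\<And>i. i < k \<Longrightarrow> unitary_rep G (d i) (Ui i) \<and> irreducible_rep G (d i) (Ui i)"
    and ineq: "\<And>i j. i < k \<Longrightarrow> j < k \<Longrightarrow> i \<noteq> j \<Longrightarrow> \<not> equiv_rep G (d i) (Ui i) (d j) (Ui j)"
    and compl: "\<And>D V. irreducible_rep G D V \<Longrightarrow> \<exists>i<k. equiv_rep G D V (d i) (Ui i)"
    and W_unitary: "W \<in> carrier_mat (blk_off d k) (n * m)"
      "W * adj W = 1\<^sub>m (blk_off d k)" "adj W * W = 1\<^sub>m (n * m)"
    and W_intertw: "\<And>g. g \<in> carrier G \<Longrightarrow>
       W * kron (U g) (1\<^sub>m m) = blk_diag k d (\<lambda>i. kron (Ui i g) (1\<^sub>m (d i))) * W"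
    and onb: "\<And>i. i < k \<Longrightarrow> orthonormal_basis (d i) (ps i) \<and> orthonormal_basis (d i) (ph i)"
    and norm: "(\<Sum>i<k. (cmod (a i))\<^sup>2) = 1"
    and i0: "i0 < k" "\<And>i. i < k \<Longrightarrow> real (d i) * cmod (a i) \<le> real (d i0) * cmod (a i0)"
    and cond: "real (d i0) * cmod (a i0) \<le> (\<Sum>i\<in>{..<k} - {i0}. real (d i) * cmod (a i))"
  shows "let psi = adj W *\<^sub>v blk_vec k d (\<lambda>i. (a i / complex_of_real (sqrt (real (d i))))
                       \<cdot>\<^sub>v ment_vec (d i) (ps i) (ph i));
             u = (\<lambda>g. kron (U g) (1\<^sub>m m) *\<^sub>v psi)
         in \<exists>M :: 'g \<Rightarrow> complex mat.
              (\<forall>g\<in>carrier G. psd (n * m) (M g)) \<and>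
              (\<forall>r<n * m. \<forall>s<n * m. (\<Sum>g\<in>carrier G. M g $$ (r, s)) = (if r = s then 1 else 0)) \<and>
              (\<forall>g\<in>carrier G. inner (u g) (M g *\<^sub>v u g) = 0)"
proof -
  interpret unitary_irrep_blocks G k d Ui ps ph
    using grp irr ineq onb by (rule unitary_irrep_blocks.intro)
  let ?N = "n * m"
  obtain c where c: "\<And>i. i < k \<Longrightarrow> c i * cnj (c i) = of_nat (d i)"
    and c_orth: "(\<Sum>i<k. cnj (c i) * (a i / complex_of_real (sqrt (real (d i)))) * of_nat (d i)) = 0"
    using exists_balanced_coefficients[OF block_dim_pos i0 cond] by blast
  define x where
    "x = blk_vec k d (\<lambda>i. (a i / complex_of_real (sqrt (real (d i)))) \<cdot>\<^sub>v ment_vec (d i) (ps i) (ph i))"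
  have x: "x = ment_sum (\<lambda>i. a i / complex_of_real (sqrt (real (d i))))"
    unfolding x_def ment_sum_def ..
  define w where "w g = adj W *\<^sub>v (block_rep g *\<^sub>v ment_sum c)" for g
  have aW: "adj W \<in> carrier_mat ?N (blk_off d k)" using W_unitary(1) by simp
  have u: "kron (U g) (1\<^sub>m m) *\<^sub>v (adj W *\<^sub>v x) = adj W *\<^sub>v (block_rep g *\<^sub>v x)" if g: "g \<in> carrier G" for g
    by (rule unitary_intertwiner_mult_adj[OF W_unitary])
      (use unitary_repD(1)[OF repU g] W_intertw[OF g] in \<open>simp_all add: block_rep_def x\<close>)
  have orth: "inner (w g) (kron (U g) (1\<^sub>m m) *\<^sub>v (adj W *\<^sub>v x)) = 0" if g: "g \<in> carrier G" for g
  proof -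
    have "inner (w g) (kron (U g) (1\<^sub>m m) *\<^sub>v (adj W *\<^sub>v x))
        = inner (block_rep g *\<^sub>v ment_sum c) (block_rep g *\<^sub>v x)"
      unfolding w_def u[OF g] by (rule inner_isometry[OF aW]) (use W_unitary(2) in \<open>simp_all add: x\<close>)
    thus ?thesis using c_orth by (simp add: x inner_block_rep_ment_sum[OF g])
  qed
  have "carrier G \<noteq> {}" using group.is_monoid[OF grp] monoid.one_closed by blast
  moreover have "w g \<in> carrier_vec ?N" for g unfolding w_def by (rule mult_mat_vec_carrier[OF aW]) simp
  moreover have "kron (U g) (1\<^sub>m m) *\<^sub>v (adj W *\<^sub>v x) \<in> carrier_vec ?N" if "g \<in> carrier G" for g
    unfolding u[OF that] by (rule mult_mat_vec_carrier[OF aW]) (simp add: x)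
  moreover have
    "mat_sum (\<lambda>g. outer (w g) (w g)) (carrier G) ?N ?N = of_nat (card (carrier G)) \<cdot>\<^sub>m 1\<^sub>m ?N"
    unfolding w_def using W_unitary(3) by (intro coisometry_orbit_ment_sum_frame[OF aW _ c]) simp_all
  ultimately show ?thesis
    unfolding Let_def x_def[symmetric] by (rule exists_excluding_rank_one_povm[OF fin _ _ _ _ orth])
qed

end
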